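(* In the setting below, the Markov chain on $\mathcal{G}$ defined by iterating the Unweighted Graph Sampler is ergodic with respect to the uniform distribution on $\mathcal{G}$; in particular it is reversible with respect to the uniform distribution and any $G'\in\mathcal{G}$ can be reached from any $G\in\mathcal{G}$ with positive probability.
   Context: Setting (unweighted graphs). $V$ is a finite vertex set; graphs are either all directed or all undirected with no multiple edges; $uv$ denotes the possible edge from $u$ to $v$ ($uv=vu$ if undirected). $G_0$ is a given graph on $V$ and $\mathcal{F}$ a given set of possible edges. $\mathcal{G}$ is the set of graphs $G$ on $V$ with the same degree sequence as $G_0$ (in- and out-degrees if directed) and $E(G)\cap\mathcal{F}=E(G_0)\cap\mathcal{F}$. $\tilde{\mathcal{F}}$ is the set of possible edges $uv$ present in every $G\in\mathcal{G}$ or absent from every $G\in\mathcal{G}$. $N_G(u)=\{v: vu\in E(G), vu\notin\tilde{\mathcal{F}}\}$, $M_G(u)=\{v: uv\notin E(G), uv\notin\tilde{\mathcal{F}}\}$. Unweighted Graph Sampler (one iteration from $G\in\mathcal{G}$): $W_{-1}=*$; sample $W_0$ uniformly from $\{v: N_G(v)\ne\emptyset\}$; $n=0$; repeat [sample $W_{n+1}$ uniformly from $N_G(W_n)\setminus\{W_{n-1}\}$; sample $W_{n+2}$ uniformly from $M_G(W_{n+1})$; remove edge $W_{n+1}W_n$ from and add edge $W_{n+1}W_{n+2}$ to the current graph $G$; $n\leftarrow n+2$] until $W_n=W_0$; output the current graph. The chain's next state is the output graph. *)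

theory Defs
  imports Main "HOL.Real"
begin

text \<open>Graphs on a vertex set V are represented by their edge sets, i.e. sets of
ordered pairs. The flag d says whether graphs are directed (d = True) or undirected
(d = False). An undirected graph is a symmetric edge set, the edge uv being
represented by both (u,v) and (v,u).\<close>

definition possible_edges :: "'a set \<Rightarrow> ('a \<times> 'a) set" where
  "possible_edges V = {(u, v). u \<in> V \<and> v \<in> V \<and> u \<noteq> v}"

definition wf_graph :: "bool \<Rightarrow> 'a set \<Rightarrow> ('a \<times> 'a) set \<Rightarrow> bool" where
  "wf_graph d V E \<longleftrightarrow> E \<subseteq> possible_edges V \<and> (\<not> d \<longrightarrow> sym E)"

definition indeg :: "('a \<times> 'a) set \<Rightarrow> 'a \<Rightarrow> nat" where
  "indeg E v = card {u. (u, v) \<in> E}"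

definition outdeg :: "('a \<times> 'a) set \<Rightarrow> 'a \<Rightarrow> nat" where
  "outdeg E v = card {u. (v, u) \<in> E}"

definition graph_class :: "bool \<Rightarrow> 'a set \<Rightarrow> ('a \<times> 'a) set \<Rightarrow> ('a \<times> 'a) set
    \<Rightarrow> ('a \<times> 'a) set set" where
  "graph_class d V F G0 = {E. wf_graph d V E
      \<and> (\<forall>v\<in>V. indeg E v = indeg G0 v \<and> outdeg E v = outdeg G0 v)
      \<and> E \<inter> F = G0 \<inter> F}"

definition fixed_pairs :: "bool \<Rightarrow> 'a set \<Rightarrow> ('a \<times> 'a) set \<Rightarrow> ('a \<times> 'a) set
    \<Rightarrow> ('a \<times> 'a) set" where
  "fixed_pairs d V F G0 = {(u, v). u \<in> V \<and> v \<in> V \<and>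
      ((\<forall>G\<in>graph_class d V F G0. (u, v) \<in> G) \<or> (\<forall>G\<in>graph_class d V F G0. (u, v) \<notin> G))}"

definition nbrs :: "('a \<times> 'a) set \<Rightarrow> ('a \<times> 'a) set \<Rightarrow> 'a \<Rightarrow> 'a set" where
  "nbrs Ft E u = {v. (v, u) \<in> E \<and> (v, u) \<notin> Ft}"

definition non_nbrs :: "'a set \<Rightarrow> ('a \<times> 'a) set \<Rightarrow> ('a \<times> 'a) set \<Rightarrow> 'a \<Rightarrow> 'a set" where
  "non_nbrs V Ft E u = {v \<in> V. (u, v) \<notin> E \<and> (u, v) \<notin> Ft}"

definition add_edge :: "bool \<Rightarrow> ('a \<times> 'a) set \<Rightarrow> 'a \<Rightarrow> 'a \<Rightarrow> ('a \<times> 'a) set" where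
  "add_edge d E u v = (if d then insert (u, v) E else insert (u, v) (insert (v, u) E))"

definition del_edge :: "bool \<Rightarrow> ('a \<times> 'a) set \<Rightarrow> 'a \<Rightarrow> 'a \<Rightarrow> ('a \<times> 'a) set" where
  "del_edge d E u v = (if d then E - {(u, v)} else E - {(u, v), (v, u)})"

text \<open>walk_prob d V Ft k E w0 prev cur G' is the probability that the repeat-loop of the
sampler, started in the current graph E with start vertex W_0 = w0, previous vertex
W_{n-1} (None encodes *) and current vertex W_n = cur, terminates within at most k
further loop iterations and outputs G'.\<close>
fun walk_prob :: "bool \<Rightarrow> 'a set \<Rightarrow> ('a \<times> 'a) set \<Rightarrow> nat \<Rightarrow> ('a \<times> 'a) set
    \<Rightarrow> 'a \<Rightarrow> 'a option \<Rightarrow> 'a \<Rightarrow> ('a \<times> 'a) set \<Rightarrow> real" where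
  "walk_prob d V Ft 0 E w0 prev cur G' = 0"
| "walk_prob d V Ft (Suc k) E w0 prev cur G' =
     (let A = nbrs Ft E cur - set_option prev in
      \<Sum>x\<in>A. \<Sum>y\<in>non_nbrs V Ft E x.
        (1 / real (card A)) * (1 / real (card (non_nbrs V Ft E x))) *
        (let E' = add_edge d (del_edge d E x cur) x y in
         if y = w0 then (if E' = G' then 1 else 0)
         else walk_prob d V Ft k E' w0 (Some x) y G'))"

text \<open>One-step transition probability of the chain (one iteration of the sampler).
If no vertex has N_G(v) nonempty, W_0 cannot be sampled and the chain stays put.\<close>
definition trans_prob :: "bool \<Rightarrow> 'a set \<Rightarrow> ('a \<times> 'a) set \<Rightarrow> ('a \<times> 'a) set
    \<Rightarrow> ('a \<times> 'a) set \<Rightarrow> ('a \<times> 'a) set \<Rightarrow> real" where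
  "trans_prob d V F G0 G G' =
     (let Ft = fixed_pairs d V F G0; S = {v \<in> V. nbrs Ft G v \<noteq> {}} in
      if S = {} then (if G' = G then 1 else 0)
      else (\<Sum>w\<in>S. (1 / real (card S)) * (SUP k. walk_prob d V Ft k G w None w G')))"

fun trans_pow :: "bool \<Rightarrow> 'a set \<Rightarrow> ('a \<times> 'a) set \<Rightarrow> ('a \<times> 'a) set \<Rightarrow> nat
    \<Rightarrow> ('a \<times> 'a) set \<Rightarrow> ('a \<times> 'a) set \<Rightarrow> real" where
  "trans_pow d V F G0 0 G G' = (if G' = G then 1 else 0)"
| "trans_pow d V F G0 (Suc n) G G' =
     (\<Sum>H\<in>graph_class d V F G0. trans_prob d V F G0 G H * trans_pow d V F G0 n H G')"

end

theory Submission
  imports Defs Complex_Main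
begin

text \<open>The loop of the sampler is a random walk that keeps the graph in the class up to one
  unit of in-degree: after each iteration one free in-edge has moved, relative to G0, from W_0 to
  the current vertex. So the output lies in the class again when the walk returns to W_0.

  Each choice the sampler makes has a probability determined by G0, the current vertex and the
  dropped neighbour alone, and each switch can be undone. Hence a run from G to G' and the
  reversed run from G' to G are equally likely: P is symmetric, which is reversibility with
  respect to the uniform distribution.

  For termination and irreducibility fix a target graph H of the class. From any state the walk
  can drop an edge outside H and add one inside H; this shrinks the symmetric difference to H,
  so following such moves the walk returns to W_0 within card V ^ 2 + 1 iterations. This
  bounds the probability to halt in every block of card V ^ 2 + 2 iterations from below, and
  from any G it reaches, with positive probability, a graph closer to H.\<close>

section \<open>Free degrees\<close>

lemma wf_graph_subset: "wf_graph d V E \<Longrightarrow> E \<subseteq> V \<times> V"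
  unfolding wf_graph_def possible_edges_def by auto

lemma wf_graph_symD: "wf_graph d V E \<Longrightarrow> \<not> d \<Longrightarrow> (u, v) \<in> E \<Longrightarrow> (v, u) \<in> E"
  unfolding wf_graph_def by (auto dest: symD)

lemma wf_graph_no_loop: "wf_graph d V E \<Longrightarrow> (u, u) \<notin> E"
  unfolding wf_graph_def possible_edges_def by auto

definition out_nbrs :: "('a \<times> 'a) set \<Rightarrow> ('a \<times> 'a) set \<Rightarrow> 'a \<Rightarrow> 'a set" where
  "out_nbrs X E u = {v. (u, v) \<in> E \<and> (u, v) \<notin> X}"

lemma finite_pairs_into: "finite E \<Longrightarrow> finite {u. (u, v) \<in> E}"
  by (rule finite_subset[of _ "fst ` E"]) force+

lemma finite_pairs_from: "finite E \<Longrightarrow> finite {u. (v, u) \<in> E}"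
  by (rule finite_subset[of _ "snd ` E"]) force+

lemma finite_nbrs: "finite E \<Longrightarrow> finite (nbrs X E v)"
  unfolding nbrs_def by (rule finite_subset[OF _ finite_pairs_into]) auto

lemma finite_out_nbrs: "finite E \<Longrightarrow> finite (out_nbrs X E v)"
  unfolding out_nbrs_def by (rule finite_subset[OF _ finite_pairs_from]) auto

lemma indeg_split: "finite E \<Longrightarrow> indeg E v = card (nbrs X E v) + card {u. (u, v) \<in> E \<inter> X}"
proof -
  assume E: "finite E"
  have "{u. (u, v) \<in> E} = nbrs X E v \<union> {u. (u, v) \<in> E \<inter> X}" unfolding nbrs_def by blast
  moreover have "finite {u. (u, v) \<in> E \<inter> X}" using E by (simp add: finite_pairs_into)
  moreover have "nbrs X E v \<inter> {u. (u, v) \<in> E \<inter> X} = {}" unfolding nbrs_def by blast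
  ultimately show ?thesis unfolding indeg_def using card_Un_disjoint finite_nbrs[OF E] by metis
qed

lemma outdeg_split: "finite E \<Longrightarrow> outdeg E v = card (out_nbrs X E v) + card {u. (v, u) \<in> E \<inter> X}"
proof -
  assume E: "finite E"
  have "{u. (v, u) \<in> E} = out_nbrs X E v \<union> {u. (v, u) \<in> E \<inter> X}" unfolding out_nbrs_def by blast
  moreover have "finite {u. (v, u) \<in> E \<inter> X}" using E by (simp add: finite_pairs_from)
  moreover have "out_nbrs X E v \<inter> {u. (v, u) \<in> E \<inter> X} = {}" unfolding out_nbrs_def by blast
  ultimately show ?thesis unfolding outdeg_def using card_Un_disjoint finite_out_nbrs[OF E] by metis
qed

locale sampler_setting =
  fixes d :: bool and V :: "'a set" and F G0 :: "('a \<times> 'a) set"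
  assumes finite_V: "finite V" and wf_G0: "wf_graph d V G0"
begin

abbreviation "\<G> \<equiv> graph_class d V F G0"
abbreviation "Ft \<equiv> fixed_pairs d V F G0"

lemma G0_in_class: "G0 \<in> \<G>"
  using wf_G0 unfolding graph_class_def by auto

lemma class_wf: "H \<in> \<G> \<Longrightarrow> wf_graph d V H"
  unfolding graph_class_def by auto

lemma class_subset: "H \<in> \<G> \<Longrightarrow> H \<subseteq> V \<times> V"
  using class_wf wf_graph_subset by blast

lemma finite_class: "finite \<G>"
  by (rule finite_subset[of _ "Pow (V \<times> V)"]) (use class_subset finite_V in auto)

lemma fixed_pairs_iff:
  "(u, v) \<in> Ft \<longleftrightarrow> u \<in> V \<and> v \<in> V \<and> ((\<forall>H\<in>\<G>. (u, v) \<in> H) \<or> (\<forall>H\<in>\<G>. (u, v) \<notin> H))"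
  unfolding fixed_pairs_def by auto

lemma loop_fixed: "u \<in> V \<Longrightarrow> (u, u) \<in> Ft"
  unfolding fixed_pairs_iff using class_wf wf_graph_no_loop[of d V] by blast

lemma fixed_pairs_sym: "\<not> d \<Longrightarrow> (u, v) \<in> Ft \<Longrightarrow> (v, u) \<in> Ft"
  unfolding fixed_pairs_iff using class_wf wf_graph_symD[of d V] by metis

lemma class_fixed_pairs: "H \<in> \<G> \<Longrightarrow> H \<inter> Ft = G0 \<inter> Ft"
  unfolding fixed_pairs_def using G0_in_class by blast

lemma F_fixed: "p \<in> F \<Longrightarrow> p \<in> V \<times> V \<Longrightarrow> p \<in> Ft"
  unfolding fixed_pairs_def graph_class_def by blast

lemma not_fixed_present: "(u, v) \<notin> Ft \<Longrightarrow> u \<in> V \<Longrightarrow> v \<in> V \<Longrightarrow> \<exists>H\<in>\<G>. (u, v) \<in> H"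
  unfolding fixed_pairs_iff by blast

lemma not_fixed_absent: "(u, v) \<notin> Ft \<Longrightarrow> u \<in> V \<Longrightarrow> v \<in> V \<Longrightarrow> \<exists>H\<in>\<G>. (u, v) \<notin> H"
  unfolding fixed_pairs_iff by blast

lemma finite_pairs_V: "E \<subseteq> V \<times> V \<Longrightarrow> finite E"
  using finite_subset finite_cartesian_product[OF finite_V finite_V] by blast

lemma finite_nbrs_V: "E \<subseteq> V \<times> V \<Longrightarrow> finite (nbrs X E v)"
  by (rule finite_nbrs[OF finite_pairs_V])

lemma finite_out_nbrs_V: "E \<subseteq> V \<times> V \<Longrightarrow> finite (out_nbrs X E v)"
  by (rule finite_out_nbrs[OF finite_pairs_V])

lemma finite_wf_graph: "wf_graph d V E \<Longrightarrow> finite E"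
  by (rule finite_pairs_V[OF wf_graph_subset])

lemma out_nbrs_eq_nbrs:
  assumes "\<not> d" "wf_graph d V E" shows "out_nbrs Ft E v = nbrs Ft E v"
proof -
  have "(v, u) \<in> E \<longleftrightarrow> (u, v) \<in> E" "(v, u) \<in> Ft \<longleftrightarrow> (u, v) \<in> Ft" for u
    using wf_graph_symD[OF assms(2,1)] fixed_pairs_sym[OF assms(1)] by meson+
  then show ?thesis unfolding out_nbrs_def nbrs_def by simp
qed

lemma class_iff_free_degrees:
  assumes "wf_graph d V E" "E \<inter> Ft = G0 \<inter> Ft"
  shows "E \<in> \<G> \<longleftrightarrow> (\<forall>v\<in>V. card (nbrs Ft E v) = card (nbrs Ft G0 v)
                         \<and> card (out_nbrs Ft E v) = card (out_nbrs Ft G0 v))"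
proof -
  have fin: "finite E" "finite G0" using assms(1) wf_G0 by (simp_all add: finite_wf_graph)
  have "indeg E v = indeg G0 v \<longleftrightarrow> card (nbrs Ft E v) = card (nbrs Ft G0 v)" for v
    using indeg_split[OF fin(1), of v Ft] indeg_split[OF fin(2), of v Ft] assms(2) by simp
  moreover have "outdeg E v = outdeg G0 v \<longleftrightarrow> card (out_nbrs Ft E v) = card (out_nbrs Ft G0 v)" for v
    using outdeg_split[OF fin(1), of v Ft] outdeg_split[OF fin(2), of v Ft] assms(2) by simp
  moreover have "E \<inter> F = G0 \<inter> F"
    using assms F_fixed wf_graph_subset[OF assms(1)] wf_graph_subset[OF wf_G0] by blast
  ultimately show ?thesis unfolding graph_class_def using assms(1) by simp
qed

lemma card_nbrs_class: "H \<in> \<G> \<Longrightarrow> v \<in> V \<Longrightarrow> card (nbrs Ft H v) = card (nbrs Ft G0 v)"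
  using class_iff_free_degrees[OF class_wf class_fixed_pairs] by blast

lemma card_out_nbrs_class: "H \<in> \<G> \<Longrightarrow> v \<in> V \<Longrightarrow> card (out_nbrs Ft H v) = card (out_nbrs Ft G0 v)"
  using class_iff_free_degrees[OF class_wf class_fixed_pairs] by blast

section \<open>The loop invariant and switches\<close>

definition walk_invariant :: "'a \<Rightarrow> ('a \<times> 'a) set \<Rightarrow> 'a \<Rightarrow> bool" where
  "walk_invariant w0 E c \<longleftrightarrow> wf_graph d V E \<and> E \<inter> Ft = G0 \<inter> Ft \<and> c \<in> V \<and> w0 \<in> V \<and>
     (\<forall>v\<in>V. card (nbrs Ft E v) + (if v = w0 then 1 else 0)
             = card (nbrs Ft G0 v) + (if v = c then 1 else 0)) \<and>
     (d \<longrightarrow> (\<forall>v\<in>V. card (out_nbrs Ft E v) = card (out_nbrs Ft G0 v)))"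

lemma walk_invariantD:
  assumes "walk_invariant w0 E c"
  shows "wf_graph d V E" "E \<subseteq> V \<times> V" "E \<inter> Ft = G0 \<inter> Ft" "c \<in> V" "w0 \<in> V"
    and "v \<in> V \<Longrightarrow> card (nbrs Ft E v) + (if v = w0 then 1 else 0)
                     = card (nbrs Ft G0 v) + (if v = c then 1 else 0)"
    and "d \<Longrightarrow> v \<in> V \<Longrightarrow> card (out_nbrs Ft E v) = card (out_nbrs Ft G0 v)"
  using assms wf_graph_subset unfolding walk_invariant_def by blast+

lemma class_walk_invariant:
  assumes "H \<in> \<G>" "w0 \<in> V" shows "walk_invariant w0 H w0"
proof -
  have "card (nbrs Ft H v) + (if v = w0 then 1 else 0) = card (nbrs Ft G0 v) + (if v = w0 then 1 else 0)"
    if "v \<in> V" for v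
    using card_nbrs_class[OF assms(1) that] by simp
  then show ?thesis unfolding walk_invariant_def
    using assms(2) class_wf[OF assms(1)] class_fixed_pairs[OF assms(1)]
      card_out_nbrs_class[OF assms(1)] by blast
qed

lemma walk_invariant_class:
  assumes inv: "walk_invariant w0 E w0" shows "E \<in> \<G>"
proof -
  note walk_invariantD[OF inv]
  moreover have "card (out_nbrs Ft E v) = card (out_nbrs Ft G0 v)" if "v \<in> V" for v
  proof (cases d)
    case False
    then show ?thesis using that walk_invariantD(6)[OF inv that]
      out_nbrs_eq_nbrs[OF False walk_invariantD(1)[OF inv]] out_nbrs_eq_nbrs[OF False wf_G0] by simp
  qed (use that walk_invariantD(7)[OF inv] in simp)
  ultimately show ?thesis using class_iff_free_degrees by simp
qed

text \<open>One iteration of the loop, with W_n = c, W_{n+1} = x and W_{n+2} = y.\<close>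

definition switch :: "('a \<times> 'a) set \<Rightarrow> 'a \<Rightarrow> 'a \<Rightarrow> 'a \<Rightarrow> ('a \<times> 'a) set" where
  "switch E x c y = add_edge d (del_edge d E x c) x y"

definition switchable :: "('a \<times> 'a) set \<Rightarrow> 'a \<Rightarrow> 'a \<Rightarrow> 'a \<Rightarrow> bool" where
  "switchable E x c y \<longleftrightarrow> x \<in> nbrs Ft E c \<and> y \<in> non_nbrs V Ft E x"

lemma switchable_iff:
  "switchable E x c y \<longleftrightarrow> (x, c) \<in> E \<and> (x, c) \<notin> Ft \<and> y \<in> V \<and> (x, y) \<notin> E \<and> (x, y) \<notin> Ft"
  unfolding switchable_def nbrs_def non_nbrs_def by blast

lemma switch_directed: "d \<Longrightarrow> switch E x c y = insert (x, y) (E - {(x, c)})"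
  unfolding switch_def add_edge_def del_edge_def by simp

lemma switch_undirected:
  "\<not> d \<Longrightarrow> switch E x c y = insert (x, y) (insert (y, x) (E - {(x, c), (c, x)}))"
  unfolding switch_def add_edge_def del_edge_def by simp

lemma switchable_distinct:
  assumes "wf_graph d V E" "switchable E x c y"
  shows "x \<in> V" "c \<in> V" "x \<noteq> c" "x \<noteq> y" "c \<noteq> y"
proof -
  show x: "x \<in> V" and "c \<in> V"
    using assms(2) wf_graph_subset[OF assms(1)] unfolding switchable_iff by blast+
  show "x \<noteq> c" using assms(2) wf_graph_no_loop[OF assms(1)] unfolding switchable_iff by blast
  show "x \<noteq> y" using assms loop_fixed[OF x] unfolding switchable_iff by blast
  show "c \<noteq> y" using assms unfolding switchable_iff by blast
qed

lemma wf_switch: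
  assumes "wf_graph d V E" "switchable E x c y"
  shows "wf_graph d V (switch E x c y)"
proof -
  note distinct = switchable_distinct[OF assms]
  have y: "y \<in> V" using assms(2) unfolding switchable_iff by blast
  show ?thesis
  proof (cases d)
    case True
    then show ?thesis using assms(1) distinct y
      unfolding switch_directed[OF True] wf_graph_def possible_edges_def by blast
  next
    case False
    have "switch E x c y \<subseteq> possible_edges V"
      using assms(1) distinct y unfolding switch_undirected[OF False] wf_graph_def possible_edges_def by blast
    moreover have "sym (switch E x c y)"
      unfolding switch_undirected[OF False] using wf_graph_symD[OF assms(1) False]
      by (auto intro!: symI)
    ultimately show ?thesis unfolding wf_graph_def by blast
  qed
qed

lemma switch_fixed_pairs:
  assumes "switchable E x c y" shows "switch E x c y \<inter> Ft = E \<inter> Ft"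
proof (cases d)
  case True
  then show ?thesis using assms unfolding switch_directed[OF True] switchable_iff by blast
next
  case False
  have "(c, x) \<notin> Ft" "(y, x) \<notin> Ft"
    using assms fixed_pairs_sym[OF False, of c x] fixed_pairs_sym[OF False, of y x]
    unfolding switchable_iff by blast+
  then show ?thesis using assms unfolding switch_undirected[OF False] switchable_iff by blast
qed

lemma card_nbrs_switch:
  assumes "wf_graph d V E" "switchable E x c y"
  shows "card (nbrs Ft (switch E x c y) v) + (if v = c then 1 else 0)
       = card (nbrs Ft E v) + (if v = y then 1 else 0)"
proof -
  note distinct = switchable_distinct[OF assms]
  have fin: "finite (nbrs Ft E v)" for v by (rule finite_nbrs[OF finite_wf_graph[OF assms(1)]])
  have xc: "x \<in> nbrs Ft E c" and xy: "x \<notin> nbrs Ft E y"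
    using assms(2) unfolding switchable_iff nbrs_def by auto
  have c0: "card (nbrs Ft E c) > 0" using xc fin[of c] by (auto simp: card_gt_0_iff)
  show ?thesis
  proof (cases d)
    case True
    have "nbrs Ft (switch E x c y) v = (if v = c then nbrs Ft E v - {x}
        else if v = y then insert x (nbrs Ft E v) else nbrs Ft E v)"
      using assms(2) distinct unfolding switch_directed[OF True] nbrs_def switchable_iff by auto
    then show ?thesis using fin xc xy distinct c0 by (auto simp: card_Diff_singleton card_insert_if)
  next
    case False
    have "(c, x) \<notin> Ft" "(y, x) \<notin> Ft"
      using assms(2) fixed_pairs_sym[OF False, of c x] fixed_pairs_sym[OF False, of y x]
      unfolding switchable_iff by blast+
    moreover have "(c, x) \<in> E" "(y, x) \<notin> E"
      using assms(2) wf_graph_symD[OF assms(1) False, of x c] wf_graph_symD[OF assms(1) False, of y x]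
      unfolding switchable_iff by blast+
    ultimately have cx: "c \<in> nbrs Ft E x" and yx: "y \<notin> nbrs Ft E x" unfolding nbrs_def by blast+
    from \<open>(c, x) \<notin> Ft\<close> \<open>(y, x) \<notin> Ft\<close>
    have eq: "nbrs Ft (switch E x c y) v = (if v = c then nbrs Ft E v - {x}
        else if v = y then insert x (nbrs Ft E v)
        else if v = x then insert y (nbrs Ft E v - {c}) else nbrs Ft E v)"
      using assms(2) distinct unfolding switch_undirected[OF False] nbrs_def switchable_iff by auto
    have x0: "card (nbrs Ft E x) > 0" using cx fin[of x] by (auto simp: card_gt_0_iff)
    show ?thesis using eq fin xc xy cx yx distinct c0 x0
      by (auto simp: card_Diff_singleton card_insert_if)
  qed
qed

lemma card_out_nbrs_switch:
  assumes "d" "wf_graph d V E" "switchable E x c y"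
  shows "card (out_nbrs Ft (switch E x c y) v) = card (out_nbrs Ft E v)"
proof -
  note distinct = switchable_distinct[OF assms(2,3)]
  have fin: "finite (out_nbrs Ft E v)" for v by (rule finite_out_nbrs[OF finite_wf_graph[OF assms(2)]])
  have xc: "c \<in> out_nbrs Ft E x" and xy: "y \<notin> out_nbrs Ft E x"
    using assms(3) unfolding switchable_iff out_nbrs_def by auto
  have "out_nbrs Ft (switch E x c y) v
      = (if v = x then insert y (out_nbrs Ft E v - {c}) else out_nbrs Ft E v)"
    using assms(3) distinct unfolding switch_directed[OF assms(1)] out_nbrs_def switchable_iff by auto
  moreover have "card (out_nbrs Ft E x) > 0" using xc fin[of x] by (auto simp: card_gt_0_iff)
  ultimately show ?thesis using fin xc xy distinct by (auto simp: card_Diff_singleton card_insert_if)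
qed

lemma walk_invariant_switch:
  assumes inv: "walk_invariant w0 E c" and sw: "switchable E x c y"
  shows "walk_invariant w0 (switch E x c y) y"
proof -
  note I = walk_invariantD[OF inv]
  have "card (nbrs Ft (switch E x c y) v) + (if v = w0 then 1 else 0)
      = card (nbrs Ft G0 v) + (if v = y then 1 else 0)" if "v \<in> V" for v
    using card_nbrs_switch[OF I(1) sw, of v] I(6)[OF that] by (auto split: if_splits)
  moreover have "card (out_nbrs Ft (switch E x c y) v) = card (out_nbrs Ft G0 v)"
    if "d" "v \<in> V" for v
    using card_out_nbrs_switch[OF that(1) I(1) sw] I(7)[OF that] by simp
  moreover have "y \<in> V" using sw unfolding switchable_iff by blast
  ultimately show ?thesis unfolding walk_invariant_def
    using wf_switch[OF I(1) sw] switch_fixed_pairs[OF sw] I(3-5) by blast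
qed

lemma switch_back:
  assumes "wf_graph d V E" "switchable E x c y"
  shows "switchable (switch E x c y) x y c" "switch (switch E x c y) x y c = E"
proof -
  note distinct = switchable_distinct[OF assms]
  have sw: "(x, c) \<in> E" "(x, c) \<notin> Ft" "y \<in> V" "(x, y) \<notin> E" "(x, y) \<notin> Ft"
    using assms(2) unfolding switchable_iff by blast+
  show "switchable (switch E x c y) x y c"
  proof (cases d)
    case True then show ?thesis
      using sw distinct unfolding switchable_iff switch_directed[OF True] by blast
  next
    case False then show ?thesis
      using sw distinct unfolding switchable_iff switch_undirected[OF False] by blast
  qed
  show "switch (switch E x c y) x y c = E"
  proof (cases d)
    case True then show ?thesis using sw distinct unfolding switch_directed[OF True] by blast
  next
    case False
    have "(c, x) \<in> E" "(y, x) \<notin> E"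
      using sw wf_graph_symD[OF assms(1) False, of x c] wf_graph_symD[OF assms(1) False, of y x] by blast+
    then show ?thesis using sw distinct unfolding switch_undirected[OF False] by blast
  qed
qed

section \<open>Walk probabilities\<close>

abbreviation wp :: "nat \<Rightarrow> ('a \<times> 'a) set \<Rightarrow> 'a \<Rightarrow> 'a option \<Rightarrow> 'a \<Rightarrow> ('a \<times> 'a) set \<Rightarrow> real" where
  "wp k E w0 prev cur G' \<equiv> walk_prob d V Ft k E w0 prev cur G'"

definition drop_choices :: "('a \<times> 'a) set \<Rightarrow> 'a option \<Rightarrow> 'a \<Rightarrow> 'a set" where
  "drop_choices E prev cur = nbrs Ft E cur - set_option prev"

definition move_prob :: "('a \<times> 'a) set \<Rightarrow> 'a option \<Rightarrow> 'a \<Rightarrow> 'a \<Rightarrow> real" where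
  "move_prob E prev cur x =
     1 / real (card (drop_choices E prev cur)) * (1 / real (card (non_nbrs V Ft E x)))"

lemma walk_prob_Suc: "wp (Suc k) E w0 prev cur G' =
  (\<Sum>x\<in>drop_choices E prev cur. \<Sum>y\<in>non_nbrs V Ft E x. move_prob E prev cur x *
     (if y = w0 then (if switch E x cur y = G' then 1 else 0)
      else wp k (switch E x cur y) w0 (Some x) y G'))"
  unfolding walk_prob.simps(2) drop_choices_def move_prob_def switch_def Let_def by (rule refl)

declare walk_prob.simps(2)[simp del]

lemma move_prob_nonneg: "0 \<le> move_prob E prev cur x"
  unfolding move_prob_def by simp

lemma choices_switchable:
  "x \<in> drop_choices E prev cur \<Longrightarrow> y \<in> non_nbrs V Ft E x \<Longrightarrow> switchable E x cur y"
  unfolding drop_choices_def switchable_def by blast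

lemma drop_choices_subset: "E \<subseteq> V \<times> V \<Longrightarrow> drop_choices E prev cur \<subseteq> V"
  unfolding drop_choices_def nbrs_def by auto

lemma non_nbrs_subset: "non_nbrs V Ft E x \<subseteq> V"
  unfolding non_nbrs_def by auto

lemma finite_drop_choices: "E \<subseteq> V \<times> V \<Longrightarrow> finite (drop_choices E prev cur)"
  using finite_subset[OF drop_choices_subset finite_V] .

lemma finite_non_nbrs: "finite (non_nbrs V Ft E x)"
  using finite_subset[OF non_nbrs_subset finite_V] .

lemma walk_prob_nonneg: "0 \<le> wp k E w0 prev cur G'"
proof (induction k arbitrary: E prev cur)
  case (Suc k)
  show ?case unfolding walk_prob_Suc
    by (intro sum_nonneg mult_nonneg_nonneg move_prob_nonneg) (simp add: Suc.IH)
qed simp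

lemma walk_prob_class:
  "walk_invariant w0 E cur \<Longrightarrow> wp k E w0 prev cur G' \<noteq> 0 \<Longrightarrow> G' \<in> \<G>"
proof (induction k arbitrary: E prev cur)
  case (Suc k)
  let ?g = "\<lambda>x y. move_prob E prev cur x * (if y = w0 then (if switch E x cur y = G' then 1 else 0)
                     else wp k (switch E x cur y) w0 (Some x) y G')"
  obtain x where x: "x \<in> drop_choices E prev cur" and "(\<Sum>y\<in>non_nbrs V Ft E x. ?g x y) \<noteq> 0"
    using Suc.prems(2) unfolding walk_prob_Suc by (meson sum.neutral)
  then obtain y where y: "y \<in> non_nbrs V Ft E x" and "?g x y \<noteq> 0" by (meson sum.neutral)
  then have nz: "(if y = w0 then (if switch E x cur y = G' then 1 else 0)
                  else wp k (switch E x cur y) w0 (Some x) y G') \<noteq> (0::real)" by auto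
  have inv: "walk_invariant w0 (switch E x cur y) y"
    using walk_invariant_switch[OF Suc.prems(1) choices_switchable[OF x y]] .
  show ?case
  proof (cases "y = w0")
    case True
    then show ?thesis using nz inv walk_invariant_class by (auto split: if_splits)
  next
    case False
    then show ?thesis using nz inv Suc.IH by simp
  qed
qed simp

lemma walk_prob_mono_Suc: "wp k E w0 prev cur G' \<le> wp (Suc k) E w0 prev cur G'"
proof (induction k arbitrary: E prev cur)
  case 0
  show ?case using walk_prob_nonneg[of "Suc 0"] by simp
next
  case (Suc k)
  show ?case unfolding walk_prob_Suc[of k E] walk_prob_Suc[of "Suc k" E]
    by (intro sum_mono mult_left_mono move_prob_nonneg) (auto intro: Suc.IH)
qed

lemma walk_prob_mono: "k \<le> k' \<Longrightarrow> wp k E w0 prev cur G' \<le> wp k' E w0 prev cur G'"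
  by (induction k' rule: dec_induct) (auto intro: order_trans[OF _ walk_prob_mono_Suc])

lemma walk_prob_Suc_ge:
  assumes "E \<subseteq> V \<times> V" "x \<in> drop_choices E prev cur" "y \<in> non_nbrs V Ft E x"
  shows "move_prob E prev cur x * (if y = w0 then (if switch E x cur y = G' then 1 else 0)
           else wp k (switch E x cur y) w0 (Some x) y G') \<le> wp (Suc k) E w0 prev cur G'"
proof -
  let ?f = "\<lambda>x y. move_prob E prev cur x * (if y = w0 then (if switch E x cur y = G' then 1 else 0)
                   else wp k (switch E x cur y) w0 (Some x) y G')"
  have nonneg: "0 \<le> ?f a b" for a b by (simp add: move_prob_nonneg walk_prob_nonneg)
  have "?f x y \<le> (\<Sum>b\<in>non_nbrs V Ft E x. ?f x b)"
    using assms(3) finite_non_nbrs nonneg by (intro member_le_sum) auto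
  also have "\<dots> \<le> (\<Sum>a\<in>drop_choices E prev cur. \<Sum>b\<in>non_nbrs V Ft E a. ?f a b)"
    using assms(2) finite_drop_choices[OF assms(1)] nonneg by (intro member_le_sum sum_nonneg) auto
  finally show ?thesis unfolding walk_prob_Suc .
qed

text \<open>Away from w0 the current vertex has one free in-edge more than in any graph H of the
  class, and the tail of an edge not in H lacks one of its free out-edges in H. So the loop
  never gets stuck, and it can always move towards H.\<close>

lemma exists_nbr_outside:
  assumes inv: "walk_invariant w0 E cur" and "cur \<noteq> w0" "H \<in> \<G>"
  shows "\<exists>x. x \<in> nbrs Ft E cur \<and> (x, cur) \<notin> H"
proof -
  note I = walk_invariantD[OF inv]
  have card: "card (nbrs Ft E cur) = card (nbrs Ft H cur) + 1"
    using I(6)[OF I(4)] assms(2) card_nbrs_class[OF assms(3) I(4)] by simp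
  have "\<not> nbrs Ft E cur \<subseteq> nbrs Ft H cur"
  proof
    assume "nbrs Ft E cur \<subseteq> nbrs Ft H cur"
    then have "card (nbrs Ft E cur) \<le> card (nbrs Ft H cur)"
      by (rule card_mono[OF finite_nbrs_V[OF class_subset[OF assms(3)]]])
    then show False using card by simp
  qed
  then show ?thesis unfolding nbrs_def by blast
qed

lemma exists_non_nbr_inside:
  assumes inv: "walk_invariant w0 E cur" and H: "H \<in> \<G>"
    and xc: "(x, c) \<in> E" "(x, c) \<notin> H" "(x, c) \<notin> Ft" and "x \<noteq> cur"
  shows "\<exists>y. (x, y) \<in> H \<and> y \<in> non_nbrs V Ft E x"
proof -
  note I = walk_invariantD[OF inv]
  have x: "x \<in> V" using xc(1) I(2) by blast
  have finE: "finite (out_nbrs Ft E x)" by (rule finite_out_nbrs_V[OF I(2)])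
  have le: "card (out_nbrs Ft E x) \<le> card (out_nbrs Ft H x)"
  proof (cases d)
    case True
    then show ?thesis using I(7)[OF True x] card_out_nbrs_class[OF H x] by simp
  next
    case False
    then show ?thesis using I(6)[OF x] card_nbrs_class[OF H x] \<open>x \<noteq> cur\<close>
        out_nbrs_eq_nbrs[OF False I(1)] out_nbrs_eq_nbrs[OF False class_wf[OF H]] by simp
  qed
  have c: "c \<in> out_nbrs Ft E x" "c \<notin> out_nbrs Ft H x" using xc unfolding out_nbrs_def by auto
  have "\<not> out_nbrs Ft H x \<subseteq> out_nbrs Ft E x"
  proof
    assume "out_nbrs Ft H x \<subseteq> out_nbrs Ft E x"
    then have "out_nbrs Ft H x \<subseteq> out_nbrs Ft E x - {c}" using c by blast
    then have "card (out_nbrs Ft H x) \<le> card (out_nbrs Ft E x - {c})" using finE by (intro card_mono) auto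
    also have "\<dots> < card (out_nbrs Ft E x)" using finE c(1) by (rule card_Diff1_less)
    finally show False using le by simp
  qed
  then show ?thesis using class_subset[OF H] unfolding out_nbrs_def non_nbrs_def by blast
qed

text \<open>The states the loop can be in: at the start, or just after a move that added the free
  edge from prev to cur without returning to w0.\<close>

definition walk_state :: "'a \<Rightarrow> ('a \<times> 'a) set \<Rightarrow> 'a option \<Rightarrow> 'a \<Rightarrow> bool" where
  "walk_state w0 E prev cur \<longleftrightarrow> walk_invariant w0 E cur \<and>
     (case prev of None \<Rightarrow> cur = w0 \<and> nbrs Ft E w0 \<noteq> {}
      | Some x \<Rightarrow> cur \<noteq> w0 \<and> x \<in> nbrs Ft E cur)"

lemma walk_state_invariant: "walk_state w0 E prev cur \<Longrightarrow> walk_invariant w0 E cur"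
  unfolding walk_state_def by blast

lemma class_walk_state: "H \<in> \<G> \<Longrightarrow> w \<in> V \<Longrightarrow> nbrs Ft H w \<noteq> {} \<Longrightarrow> walk_state w H None w"
  unfolding walk_state_def using class_walk_invariant by simp

lemma drop_choices_nonempty:
  assumes st: "walk_state w0 E prev cur" shows "drop_choices E prev cur \<noteq> {}"
proof (cases prev)
  case None
  then show ?thesis using st unfolding walk_state_def drop_choices_def by simp
next
  case (Some x)
  then have "cur \<noteq> w0" and inv: "walk_invariant w0 E cur" and x: "x \<in> nbrs Ft E cur"
    using st unfolding walk_state_def by auto
  have "(x, cur) \<notin> Ft" "x \<in> V" "cur \<in> V"
    using x walk_invariantD(2)[OF inv] unfolding nbrs_def by auto
  then obtain H where H: "H \<in> \<G>" "(x, cur) \<in> H" using not_fixed_present by blast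
  obtain x' where "x' \<in> nbrs Ft E cur" "(x', cur) \<notin> H"
    using exists_nbr_outside[OF inv \<open>cur \<noteq> w0\<close> H(1)] by blast
  then have "x' \<in> drop_choices E prev cur" using H(2) Some unfolding drop_choices_def by auto
  then show ?thesis by blast
qed

lemma non_nbrs_nonempty:
  assumes st: "walk_state w0 E prev cur" and x: "x \<in> drop_choices E prev cur"
  shows "non_nbrs V Ft E x \<noteq> {}"
proof -
  have inv: "walk_invariant w0 E cur" using walk_state_invariant[OF st] .
  have xc: "(x, cur) \<in> E" "(x, cur) \<notin> Ft" using x unfolding drop_choices_def nbrs_def by auto
  then have "x \<in> V" "cur \<in> V" "x \<noteq> cur"
    using walk_invariantD(2)[OF inv] wf_graph_no_loop[OF walk_invariantD(1)[OF inv]] by auto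
  then obtain H where "H \<in> \<G>" "(x, cur) \<notin> H" using not_fixed_absent xc(2) by blast
  then show ?thesis using exists_non_nbr_inside[OF inv _ xc(1) _ xc(2)] \<open>x \<noteq> cur\<close> by blast
qed

lemma walk_state_switch:
  assumes st: "walk_state w0 E prev cur"
    and x: "x \<in> drop_choices E prev cur" and y: "y \<in> non_nbrs V Ft E x" and "y \<noteq> w0"
  shows "walk_state w0 (switch E x cur y) (Some x) y"
proof -
  have "(x, y) \<in> switch E x cur y" unfolding switch_def add_edge_def by auto
  moreover have "(x, y) \<notin> Ft" using y unfolding non_nbrs_def by blast
  ultimately show ?thesis unfolding walk_state_def nbrs_def
    using walk_invariant_switch[OF walk_state_invariant[OF st] choices_switchable[OF x y]] \<open>y \<noteq> w0\<close>
    by simp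
qed

lemma walk_state_halt:
  assumes "walk_state w0 E prev cur" "x \<in> drop_choices E prev cur" "w0 \<in> non_nbrs V Ft E x"
  shows "switch E x cur w0 \<in> \<G>"
  using walk_invariant_switch[OF walk_state_invariant[OF assms(1)] choices_switchable[OF assms(2,3)]]
  by (rule walk_invariant_class)

lemma move_prob_sum:
  assumes st: "walk_state w0 E prev cur"
  shows "(\<Sum>x\<in>drop_choices E prev cur. \<Sum>y\<in>non_nbrs V Ft E x. move_prob E prev cur x) = 1"
proof -
  let ?A = "drop_choices E prev cur"
  have fin: "finite ?A"
    by (rule finite_drop_choices[OF walk_invariantD(2)[OF walk_state_invariant[OF st]]])
  have "(\<Sum>y\<in>non_nbrs V Ft E x. move_prob E prev cur x) = 1 / real (card ?A)" if "x \<in> ?A" for x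
    using non_nbrs_nonempty[OF st that] finite_non_nbrs[of E x]
    unfolding move_prob_def by (simp add: card_gt_0_iff)
  then have "(\<Sum>x\<in>?A. \<Sum>y\<in>non_nbrs V Ft E x. move_prob E prev cur x) = (\<Sum>x\<in>?A. 1 / real (card ?A))"
    by (rule sum.cong[OF refl])
  also have "\<dots> = 1" using fin drop_choices_nonempty[OF st] by (simp add: card_gt_0_iff)
  finally show ?thesis .
qed

definition halt_prob :: "nat \<Rightarrow> 'a \<Rightarrow> ('a \<times> 'a) set \<Rightarrow> 'a option \<Rightarrow> 'a \<Rightarrow> real" where
  "halt_prob k w0 E prev cur = (\<Sum>G'\<in>\<G>. wp k E w0 prev cur G')"

lemma halt_prob_0 [simp]: "halt_prob 0 w0 E prev cur = 0"
  unfolding halt_prob_def by simp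

lemma halt_prob_mono: "k \<le> k' \<Longrightarrow> halt_prob k w0 E prev cur \<le> halt_prob k' w0 E prev cur"
  unfolding halt_prob_def by (intro sum_mono walk_prob_mono)

lemma walk_prob_le_halt_prob:
  assumes "walk_invariant w0 E cur" shows "wp k E w0 prev cur G' \<le> halt_prob k w0 E prev cur"
proof (cases "G' \<in> \<G>")
  case True
  then show ?thesis unfolding halt_prob_def
    using finite_class by (intro member_le_sum walk_prob_nonneg)
next
  case False
  then have "wp k E w0 prev cur G' = 0" using walk_prob_class[OF assms] by blast
  then show ?thesis unfolding halt_prob_def by (simp add: sum_nonneg walk_prob_nonneg)
qed

lemma halt_prob_Suc:
  assumes st: "walk_state w0 E prev cur"
  shows "halt_prob (Suc k) w0 E prev cur =
    (\<Sum>x\<in>drop_choices E prev cur. \<Sum>y\<in>non_nbrs V Ft E x. move_prob E prev cur x *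
       (if y = w0 then 1 else halt_prob k w0 (switch E x cur y) (Some x) y))"
proof -
  let ?g = "\<lambda>x y G'. if y = w0 then (if switch E x cur y = G' then 1 else 0)
                     else wp k (switch E x cur y) w0 (Some x) y G'"
  have "halt_prob (Suc k) w0 E prev cur =
      (\<Sum>x\<in>drop_choices E prev cur. \<Sum>y\<in>non_nbrs V Ft E x. \<Sum>G'\<in>\<G>. move_prob E prev cur x * ?g x y G')"
    unfolding halt_prob_def walk_prob_Suc by (subst sum.swap, subst sum.swap) (rule refl)
  also have "\<dots> = (\<Sum>x\<in>drop_choices E prev cur. \<Sum>y\<in>non_nbrs V Ft E x. move_prob E prev cur x *
       (if y = w0 then 1 else halt_prob k w0 (switch E x cur y) (Some x) y))"
  proof (intro sum.cong refl)
    fix x y assume x: "x \<in> drop_choices E prev cur" and y: "y \<in> non_nbrs V Ft E x"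
    show "(\<Sum>G'\<in>\<G>. move_prob E prev cur x * ?g x y G') = move_prob E prev cur x *
       (if y = w0 then 1 else halt_prob k w0 (switch E x cur y) (Some x) y)"
      using walk_state_halt[OF st x] y finite_class
      by (cases "y = w0") (simp_all add: sum_distrib_left[symmetric] halt_prob_def)
  qed
  finally show ?thesis .
qed

lemma halt_prob_le_1: "walk_state w0 E prev cur \<Longrightarrow> halt_prob k w0 E prev cur \<le> 1"
proof (induction k arbitrary: E prev cur)
  case (Suc k)
  have "halt_prob (Suc k) w0 E prev cur
      \<le> (\<Sum>x\<in>drop_choices E prev cur. \<Sum>y\<in>non_nbrs V Ft E x. move_prob E prev cur x * 1)"
    unfolding halt_prob_Suc[OF Suc.prems]
    by (intro sum_mono mult_left_mono move_prob_nonneg)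
      (simp add: Suc.IH walk_state_switch[OF Suc.prems])
  also have "\<dots> = 1" using move_prob_sum[OF Suc.prems] by simp
  finally show ?case .
qed simp

lemma not_halt_Suc:
  assumes st: "walk_state w0 E prev cur"
  shows "1 - halt_prob (Suc k) w0 E prev cur =
    (\<Sum>x\<in>drop_choices E prev cur. \<Sum>y\<in>non_nbrs V Ft E x. move_prob E prev cur x *
       (if y = w0 then 0 else 1 - halt_prob k w0 (switch E x cur y) (Some x) y))"
proof -
  have "1 - halt_prob (Suc k) w0 E prev cur =
     (\<Sum>x\<in>drop_choices E prev cur. \<Sum>y\<in>non_nbrs V Ft E x. move_prob E prev cur x
        - move_prob E prev cur x * (if y = w0 then 1 else halt_prob k w0 (switch E x cur y) (Some x) y))"
    unfolding halt_prob_Suc[OF st] move_prob_sum[OF st, symmetric] by (simp add: sum_subtractf)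
  also have "\<dots> = (\<Sum>x\<in>drop_choices E prev cur. \<Sum>y\<in>non_nbrs V Ft E x. move_prob E prev cur x *
       (if y = w0 then 0 else 1 - halt_prob k w0 (switch E x cur y) (Some x) y))"
    by (intro sum.cong refl) (simp add: algebra_simps)
  finally show ?thesis .
qed

lemma not_halt_add:
  assumes B: "\<And>E prev cur. walk_state w0 E prev cur \<Longrightarrow> 1 - halt_prob m w0 E prev cur \<le> B"
    and "0 \<le> B"
  shows "walk_state w0 E prev cur \<Longrightarrow>
    1 - halt_prob (n + m) w0 E prev cur \<le> (1 - halt_prob n w0 E prev cur) * B"
proof (induction n arbitrary: E prev cur)
  case (Suc n)
  have "1 - halt_prob (Suc n + m) w0 E prev cur
     \<le> (\<Sum>x\<in>drop_choices E prev cur. \<Sum>y\<in>non_nbrs V Ft E x. move_prob E prev cur x *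
         ((if y = w0 then 0 else 1 - halt_prob n w0 (switch E x cur y) (Some x) y) * B))"
    unfolding add_Suc not_halt_Suc[OF Suc.prems]
    by (intro sum_mono mult_left_mono move_prob_nonneg)
      (simp add: Suc.IH walk_state_switch[OF Suc.prems])
  also have "\<dots> = (1 - halt_prob (Suc n) w0 E prev cur) * B"
    unfolding not_halt_Suc[OF Suc.prems] by (simp add: sum_distrib_right mult.assoc)
  finally show ?case .
qed (use B in simp)

section \<open>Greedy walks and termination\<close>

lemma sym_diff_switch:
  assumes "wf_graph d V E" "H \<in> \<G>" "switchable E x c y" "(x, c) \<notin> H" "(x, y) \<in> H"
  shows "sym_diff (switch E x c y) H \<subset> sym_diff E H"
proof -
  note distinct = switchable_distinct[OF assms(1,3)]
  have sw: "(x, c) \<in> E" "(x, y) \<notin> E" using assms(3) unfolding switchable_iff by blast+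
  have "sym_diff (switch E x c y) H \<subseteq> sym_diff E H - {(x, c)}"
  proof (cases d)
    case True
    then show ?thesis using assms(4,5) distinct unfolding switch_directed[OF True] by blast
  next
    case False
    have "(y, x) \<in> H" "(c, x) \<notin> H"
      using assms(4,5) wf_graph_symD[OF class_wf[OF assms(2)] False, of x y]
        wf_graph_symD[OF class_wf[OF assms(2)] False, of c x] by blast+
    then show ?thesis using assms(4,5) distinct unfolding switch_undirected[OF False] by blast
  qed
  moreover have "(x, c) \<in> sym_diff E H" using sw assms(4) by blast
  ultimately show ?thesis by blast
qed

lemma finite_sym_diff: "E \<subseteq> V \<times> V \<Longrightarrow> H \<subseteq> V \<times> V \<Longrightarrow> finite (sym_diff E H)"
  using finite_pairs_V by blast

lemma card_sym_diff_le: "E \<subseteq> V \<times> V \<Longrightarrow> H \<subseteq> V \<times> V \<Longrightarrow> card (sym_diff E H) \<le> card V ^ 2"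
proof -
  assume "E \<subseteq> V \<times> V" "H \<subseteq> V \<times> V"
  then have "card (sym_diff E H) \<le> card (V \<times> V)" using finite_V by (intro card_mono) auto
  then show ?thesis by (simp add: card_cartesian_product power2_eq_square)
qed

lemma card_sym_diff_switch:
  assumes "wf_graph d V E" "H \<in> \<G>" "switchable E x c y" "(x, c) \<notin> H" "(x, y) \<in> H"
  shows "card (sym_diff (switch E x c y) H) < card (sym_diff E H)"
  using sym_diff_switch[OF assms]
  by (rule psubset_card_mono[OF finite_sym_diff[OF wf_graph_subset[OF assms(1)] class_subset[OF assms(2)]]])

lemma switch_toward:
  assumes H: "H \<in> \<G>" and st: "walk_state w0 E (Some x) cur" and "(x, cur) \<in> H"
  obtains x' y' where "x' \<in> drop_choices E (Some x) cur" "y' \<in> non_nbrs V Ft E x'"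
    "(x', cur) \<notin> H" "(x', y') \<in> H"
proof -
  have inv: "walk_invariant w0 E cur" and "cur \<noteq> w0" using st unfolding walk_state_def by auto
  then obtain x' where x': "x' \<in> nbrs Ft E cur" "(x', cur) \<notin> H"
    using exists_nbr_outside[OF inv _ H] by blast
  have xc: "(x', cur) \<in> E" "(x', cur) \<notin> Ft" using x'(1) unfolding nbrs_def by auto
  moreover have "x' \<noteq> cur" using xc(1) wf_graph_no_loop[OF walk_invariantD(1)[OF inv]] by blast
  ultimately obtain y' where "(x', y') \<in> H" "y' \<in> non_nbrs V Ft E x'"
    using exists_non_nbr_inside[OF inv H _ x'(2)] by blast
  moreover have "x' \<in> drop_choices E (Some x) cur"
    using x' \<open>(x, cur) \<in> H\<close> unfolding drop_choices_def by auto
  ultimately show ?thesis using that x'(2) by blast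
qed

definition min_move_prob :: real where
  "min_move_prob = 1 / real (card V) ^ 2"

lemma min_move_prob_pos: "v \<in> V \<Longrightarrow> 0 < min_move_prob"
  unfolding min_move_prob_def using finite_V card_gt_0_iff by fastforce

lemma min_move_prob_le_1: "v \<in> V \<Longrightarrow> min_move_prob \<le> 1"
proof -
  assume "v \<in> V"
  then have "1 \<le> card V" using finite_V by (auto simp: Suc_le_eq card_gt_0_iff)
  then show ?thesis unfolding min_move_prob_def by (simp add: divide_le_eq)
qed

lemma move_prob_ge:
  assumes "E \<subseteq> V \<times> V" "x \<in> drop_choices E prev cur" "y \<in> non_nbrs V Ft E x"
  shows "min_move_prob \<le> move_prob E prev cur x"
proof -
  let ?a = "card (drop_choices E prev cur)" and ?m = "card (non_nbrs V Ft E x)"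
  have "1 \<le> ?a" "?a \<le> card V"
    using assms(2) finite_drop_choices[OF assms(1)] card_mono[OF finite_V drop_choices_subset[OF assms(1)]]
    by (auto simp: Suc_le_eq card_gt_0_iff)
  moreover have "1 \<le> ?m" "?m \<le> card V"
    using assms(3) finite_non_nbrs card_mono[OF finite_V non_nbrs_subset]
    by (auto simp: Suc_le_eq card_gt_0_iff)
  ultimately have "1 \<le> real ?a * real ?m" "real ?a * real ?m \<le> real (card V) * real (card V)"
    using mult_mono[of 1 "real ?a" 1 "real ?m"] by (simp_all add: mult_mono)
  then show ?thesis unfolding min_move_prob_def move_prob_def
    by (simp add: power2_eq_square frac_le)
qed

lemma walk_prob_Suc_ge_halt:
  assumes "E \<subseteq> V \<times> V" "x \<in> drop_choices E prev cur" "w0 \<in> non_nbrs V Ft E x"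
  shows "min_move_prob \<le> wp (Suc k) E w0 prev cur (switch E x cur w0)"
  using move_prob_ge[OF assms] walk_prob_Suc_ge[OF assms, of w0 "switch E x cur w0" k] by simp

lemma walk_prob_Suc_ge_continue:
  assumes "E \<subseteq> V \<times> V" "x \<in> drop_choices E prev cur" "y \<in> non_nbrs V Ft E x" "y \<noteq> w0"
  shows "min_move_prob * wp k (switch E x cur y) w0 (Some x) y G' \<le> wp (Suc k) E w0 prev cur G'"
proof -
  have "min_move_prob * wp k (switch E x cur y) w0 (Some x) y G'
      \<le> move_prob E prev cur x * wp k (switch E x cur y) w0 (Some x) y G'"
    using move_prob_ge[OF assms(1-3)] by (intro mult_right_mono walk_prob_nonneg)
  also have "\<dots> \<le> wp (Suc k) E w0 prev cur G'"
    using walk_prob_Suc_ge[OF assms(1-3), of w0 G' k] assms(4) by simp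
  finally show ?thesis .
qed

text \<open>Greedy walk towards a graph H of the class: always drop an edge not in H and add one
  in H. The symmetric difference to H shrinks with every move, so such a walk returns to w0
  within card (E \<triangle> H) + 1 moves.\<close>

lemma greedy_walk:
  assumes H: "H \<in> \<G>"
  shows "walk_state w0 E (Some x) cur \<Longrightarrow> (x, cur) \<in> H \<Longrightarrow>
    \<exists>G''. min_move_prob ^ (card (sym_diff E H) + 1) \<le> wp (card (sym_diff E H) + 1) E w0 (Some x) cur G''
        \<and> card (sym_diff G'' H) \<le> card (sym_diff E H)"
proof (induction "card (sym_diff E H)" arbitrary: E x cur rule: less_induct)
  case less
  let ?N = "card (sym_diff E H)"
  note I = walk_invariantD[OF walk_state_invariant[OF less.prems(1)]]
  obtain x' y' where x': "x' \<in> drop_choices E (Some x) cur" and y': "y' \<in> non_nbrs V Ft E x'"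
    and out: "(x', cur) \<notin> H" and into: "(x', y') \<in> H"
    using switch_toward[OF H less.prems] .
  let ?E' = "switch E x' cur y'"
  let ?N' = "card (sym_diff ?E' H)"
  have less': "?N' < ?N" using card_sym_diff_switch[OF I(1) H choices_switchable[OF x' y'] out into] .
  have p: "0 < min_move_prob" "min_move_prob \<le> 1"
    using min_move_prob_pos[OF I(4)] min_move_prob_le_1[OF I(4)] by auto
  show ?case
  proof (cases "y' = w0")
    case True
    have "min_move_prob ^ (?N + 1) \<le> min_move_prob" using p by (simp add: power_le_one)
    also have "\<dots> \<le> wp (?N + 1) E w0 (Some x) cur ?E'"
      using walk_prob_Suc_ge_halt[OF I(2) x'] y' True by simp
    finally show ?thesis using less' by (intro exI[of _ ?E']) simp
  next
    case False
    obtain G'' where G'': "min_move_prob ^ (?N' + 1) \<le> wp (?N' + 1) ?E' w0 (Some x') y' G''"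
        "card (sym_diff G'' H) \<le> ?N'"
      using less.hyps[OF less' walk_state_switch[OF less.prems(1) x' y' False] into] by blast
    have "min_move_prob ^ (?N + 1) = min_move_prob * min_move_prob ^ ?N" by simp
    also have "\<dots> \<le> min_move_prob * min_move_prob ^ (?N' + 1)"
      using p less' by (intro mult_left_mono power_decreasing) auto
    also have "\<dots> \<le> min_move_prob * wp ?N ?E' w0 (Some x') y' G''"
      using p G''(1) walk_prob_mono[of "?N' + 1" ?N] less' by (intro mult_left_mono) (auto intro: order_trans)
    also have "\<dots> \<le> wp (?N + 1) E w0 (Some x) cur G''"
      using walk_prob_Suc_ge_continue[OF I(2) x' y' False] by simp
    finally show ?thesis using G''(2) less' by (intro exI[of _ G'']) simp
  qed
qed

definition round_len :: nat where
  "round_len = card V ^ 2 + 1"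

definition round_halt_bound :: real where
  "round_halt_bound = min_move_prob ^ round_len"

lemma round_halt_bound_pos: "v \<in> V \<Longrightarrow> 0 < round_halt_bound"
  unfolding round_halt_bound_def using min_move_prob_pos by simp

lemma round_halt_bound_le_1: "v \<in> V \<Longrightarrow> round_halt_bound \<le> 1"
  unfolding round_halt_bound_def
  by (rule power_le_one[OF less_imp_le[OF min_move_prob_pos] min_move_prob_le_1])

lemma halt_prob_lower_Some:
  assumes st: "walk_state w0 E (Some x) cur"
  shows "round_halt_bound \<le> halt_prob round_len w0 E (Some x) cur"
proof -
  have inv: "walk_invariant w0 E cur" using walk_state_invariant[OF st] .
  have "x \<in> nbrs Ft E cur" using st unfolding walk_state_def by simp
  then have "(x, cur) \<notin> Ft" "x \<in> V" "cur \<in> V" using walk_invariantD(2)[OF inv] unfolding nbrs_def by auto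
  then obtain H where H: "H \<in> \<G>" "(x, cur) \<in> H" using not_fixed_present by blast
  let ?N = "card (sym_diff E H) + 1"
  obtain G'' where G'': "min_move_prob ^ ?N \<le> wp ?N E w0 (Some x) cur G''"
    using greedy_walk[OF H(1) st H(2)] by blast
  have N: "?N \<le> round_len"
    using card_sym_diff_le[OF walk_invariantD(2)[OF inv] class_subset[OF H(1)]]
    unfolding round_len_def by simp
  have "round_halt_bound \<le> min_move_prob ^ ?N" unfolding round_halt_bound_def
    using N min_move_prob_pos[OF \<open>x \<in> V\<close>] min_move_prob_le_1[OF \<open>x \<in> V\<close>]
    by (intro power_decreasing) auto
  also have "\<dots> \<le> wp ?N E w0 (Some x) cur G''" by (rule G'')
  also have "\<dots> \<le> wp round_len E w0 (Some x) cur G''" using N by (rule walk_prob_mono)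
  also have "\<dots> \<le> halt_prob round_len w0 E (Some x) cur" by (rule walk_prob_le_halt_prob[OF inv])
  finally show ?thesis .
qed

lemma halt_prob_lower:
  assumes st: "walk_state w0 E prev cur"
  shows "round_halt_bound \<le> halt_prob (Suc round_len) w0 E prev cur"
proof (cases prev)
  case (Some x)
  then show ?thesis using halt_prob_lower_Some[of w0 E x cur] st
      halt_prob_mono[of round_len "Suc round_len" w0 E prev cur] by simp
next
  case None
  have w0: "w0 \<in> V" using walk_invariantD(5)[OF walk_state_invariant[OF st]] .
  have "round_halt_bound = (\<Sum>x\<in>drop_choices E prev cur. \<Sum>y\<in>non_nbrs V Ft E x.
      move_prob E prev cur x) * round_halt_bound"
    using move_prob_sum[OF st] by simp
  also have "\<dots> = (\<Sum>x\<in>drop_choices E prev cur. \<Sum>y\<in>non_nbrs V Ft E x.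
      move_prob E prev cur x * round_halt_bound)"
    by (simp add: sum_distrib_right mult.assoc)
  also have "\<dots> \<le> halt_prob (Suc round_len) w0 E prev cur"
    unfolding halt_prob_Suc[OF st]
    using round_halt_bound_le_1[OF w0] halt_prob_lower_Some[OF walk_state_switch[OF st]]
    by (intro sum_mono mult_left_mono move_prob_nonneg) simp
  finally show ?thesis .
qed

lemma not_halt_geometric:
  assumes "w0 \<in> V"
  shows "walk_state w0 E prev cur \<Longrightarrow>
    1 - halt_prob (j * Suc round_len) w0 E prev cur \<le> (1 - round_halt_bound) ^ j"
proof (induction j arbitrary: E prev cur)
  case (Suc j)
  have B: "0 \<le> (1 - round_halt_bound) ^ j" using round_halt_bound_le_1[OF assms] by simp
  have "1 - halt_prob (Suc round_len + j * Suc round_len) w0 E prev cur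
      \<le> (1 - halt_prob (Suc round_len) w0 E prev cur) * (1 - round_halt_bound) ^ j"
    by (rule not_halt_add[OF Suc.IH B Suc.prems])
  also have "\<dots> \<le> (1 - round_halt_bound) * (1 - round_halt_bound) ^ j"
    using halt_prob_lower[OF Suc.prems] B by (intro mult_right_mono) auto
  finally show ?case by (simp add: algebra_simps)
qed simp

lemma bdd_above_walk_prob:
  "walk_state w0 G prev cur \<Longrightarrow> bdd_above (range (\<lambda>k. wp k G w0 prev cur G'))"
  using walk_prob_le_halt_prob[OF walk_state_invariant] halt_prob_le_1
  by (intro bdd_aboveI[of _ 1]) (fastforce intro: order_trans)

text \<open>The loop terminates with probability one.\<close>

lemma sum_SUP_walk_prob:
  assumes st: "walk_state w0 G None w0"
  shows "(\<Sum>G'\<in>\<G>. SUP k. wp k G w0 None w0 G') = 1"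
proof -
  let ?l = "\<Sum>G'\<in>\<G>. SUP k. wp k G w0 None w0 G'"
  have w0: "w0 \<in> V" using walk_invariantD(5)[OF walk_state_invariant[OF st]] .
  have "(\<lambda>k. wp k G w0 None w0 G') \<longlonglongrightarrow> (SUP k. wp k G w0 None w0 G')" for G'
    by (rule LIMSEQ_incseq_SUP[OF bdd_above_walk_prob[OF st]]) (intro incseq_SucI walk_prob_mono_Suc)
  then have lim: "(\<lambda>k. halt_prob k w0 G None w0) \<longlonglongrightarrow> ?l"
    unfolding halt_prob_def by (rule tendsto_sum)
  have inc: "incseq (\<lambda>k. halt_prob k w0 G None w0)" by (intro incseq_SucI halt_prob_mono) simp
  have "?l \<le> 1" using lim halt_prob_le_1[OF st] by (intro LIMSEQ_le_const2) auto
  moreover have "1 - 0 \<le> ?l"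
  proof (rule LIMSEQ_le_const2)
    show "(\<lambda>j. 1 - (1 - round_halt_bound) ^ j) \<longlonglongrightarrow> 1 - 0"
      using round_halt_bound_pos[OF w0] round_halt_bound_le_1[OF w0] by (intro tendsto_intros) auto
    show "\<exists>N. \<forall>j\<ge>N. 1 - (1 - round_halt_bound) ^ j \<le> ?l"
    proof (intro exI allI impI)
      fix j
      show "1 - (1 - round_halt_bound) ^ j \<le> ?l"
        using not_halt_geometric[OF w0 st, of j] incseq_le[OF inc lim, of "j * Suc round_len"]
        by linarith
    qed
  qed
  ultimately show ?thesis by simp
qed

section \<open>Reversed walks\<close>

text \<open>A list c, x1, y1, x2, y2, ... describes successive switches: the edge from x1 to c is
  rotated to y1, then the edge from x2 to y1 is rotated to y2, and so on. Every switch can be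
  undone, so the reversed list leads back.\<close>

fun switch_seq :: "('a \<times> 'a) set \<Rightarrow> 'a list \<Rightarrow> ('a \<times> 'a) set \<Rightarrow> bool" where
  "switch_seq E [c] G' \<longleftrightarrow> G' = E"
| "switch_seq E (c # x # y # r) G' \<longleftrightarrow> switchable E x c y \<and> switch_seq (switch E x c y) (y # r) G'"
| "switch_seq E _ G' \<longleftrightarrow> False"

lemma switch_seq_snoc:
  "switch_seq E ws E1 \<Longrightarrow> switchable E1 x (last ws) c \<Longrightarrow>
    switch_seq E (ws @ [x, c]) (switch E1 x (last ws) c)"
  by (induction E ws E1 rule: switch_seq.induct) auto

lemma switch_seq_rev: "switch_seq E ws G' \<Longrightarrow> wf_graph d V E \<Longrightarrow> switch_seq G' (rev ws) E"
proof (induction E ws G' rule: switch_seq.induct)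
  case (2 E c x y r G')
  have sw: "switchable E x c y" and seq: "switch_seq (switch E x c y) (y # r) G'" using 2(2) by auto
  have "switch_seq G' (rev (y # r)) (switch E x c y)" using 2(1)[OF seq wf_switch[OF 2(3) sw]] .
  then have "switch_seq G' (rev (y # r) @ [x, c]) (switch (switch E x c y) x y c)"
    using switch_seq_snoc switch_back(1)[OF 2(3) sw] by fastforce
  then show ?case using switch_back(2)[OF 2(3) sw] by simp
qed auto

fun flat_pairs :: "('a \<times> 'a) list \<Rightarrow> 'a list" where
  "flat_pairs [] = []"
| "flat_pairs ((x, y) # ps) = x # y # flat_pairs ps"

lemma flat_pairs_append: "flat_pairs (xs @ ys) = flat_pairs xs @ flat_pairs ys"
  by (induction xs rule: flat_pairs.induct) auto

fun no_backtrack :: "'a option \<Rightarrow> ('a \<times> 'a) list \<Rightarrow> bool" where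
  "no_backtrack prev [] \<longleftrightarrow> True"
| "no_backtrack prev ((x, y) # ps) \<longleftrightarrow> x \<notin> set_option prev \<and> no_backtrack (Some x) ps"

lemma no_backtrack_Some: "no_backtrack (Some a) ps \<longleftrightarrow> successively (\<noteq>) (a # map fst ps)"
proof (induction ps arbitrary: a)
  case (Cons p ps)
  obtain x y where "p = (x, y)" by (cases p)
  then show ?case using Cons.IH[of x] by auto
qed simp

lemma no_backtrack_None: "no_backtrack None ps \<longleftrightarrow> successively (\<noteq>) (map fst ps)"
  by (cases ps) (auto simp: no_backtrack_Some)

lemma successively_neq_rev: "successively (\<noteq>) (rev xs) \<longleftrightarrow> successively (\<noteq>) xs"
  by (simp add: successively_rev) (rule successively_cong; auto)

fun returns_last :: "'a \<Rightarrow> ('a \<times> 'a) list \<Rightarrow> bool" where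
  "returns_last w0 [] \<longleftrightarrow> False"
| "returns_last w0 ((x, y) # ps) \<longleftrightarrow> (if y = w0 then ps = [] else returns_last w0 ps)"

lemma returns_last_iff:
  "returns_last w0 ps \<longleftrightarrow> map snd ps \<noteq> [] \<and> last (map snd ps) = w0 \<and> w0 \<notin> set (butlast (map snd ps))"
  by (induction ps rule: returns_last.induct) auto

text \<open>walk_path w0 E prev cur ps G' says that the loop, started in state (E, prev, cur), can
  sample the vertices ps = [(W1, W2), (W3, W4), ...] and then halt with output G'.\<close>

fun walk_path :: "'a \<Rightarrow> ('a \<times> 'a) set \<Rightarrow> 'a option \<Rightarrow> 'a \<Rightarrow> ('a \<times> 'a) list \<Rightarrow> ('a \<times> 'a) set \<Rightarrow> bool" where
  "walk_path w0 E prev cur [] G' \<longleftrightarrow> False"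
| "walk_path w0 E prev cur ((x, y) # ps) G' \<longleftrightarrow>
     x \<in> drop_choices E prev cur \<and> y \<in> non_nbrs V Ft E x \<and>
     (if y = w0 then ps = [] \<and> switch E x cur y = G'
      else walk_path w0 (switch E x cur y) (Some x) y ps G')"

lemma walk_path_iff:
  "walk_path w0 E prev cur ps G' \<longleftrightarrow>
     switch_seq E (cur # flat_pairs ps) G' \<and> no_backtrack prev ps \<and> returns_last w0 ps"
proof (induction ps arbitrary: E prev cur)
  case (Cons p ps)
  obtain x y where p: "p = (x, y)" by (cases p)
  have choices: "x \<in> drop_choices E prev cur \<and> y \<in> non_nbrs V Ft E x
      \<longleftrightarrow> switchable E x cur y \<and> x \<notin> set_option prev"
    unfolding drop_choices_def switchable_def by blast
  show ?case
  proof (cases "y = w0")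
    case True
    then show ?thesis using p choices by (cases ps) auto
  next
    case False
    then show ?thesis using p Cons.IH choices by auto
  qed
qed simp

text \<open>The reversal of a walk from w0: the vertices w0, x1, y1, ..., xn, yn = w0 are read
  backwards.\<close>

definition reverse_walk :: "'a \<Rightarrow> ('a \<times> 'a) list \<Rightarrow> ('a \<times> 'a) list" where
  "reverse_walk w0 ps = zip (rev (map fst ps)) (rev (butlast (w0 # map snd ps)))"

lemma length_reverse_walk [simp]: "length (reverse_walk w0 ps) = length ps"
  unfolding reverse_walk_def by simp

lemma map_fst_reverse_walk: "map fst (reverse_walk w0 ps) = rev (map fst ps)"
  unfolding reverse_walk_def by simp

lemma map_snd_reverse_walk: "map snd (reverse_walk w0 ps) = rev (butlast (w0 # map snd ps))"
  unfolding reverse_walk_def by simp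

lemma rev_flat_pairs:
  "rev (w0 # flat_pairs ps) = last (w0 # map snd ps) # flat_pairs (reverse_walk w0 ps)"
proof (induction ps rule: rev_induct)
  case (snoc p qs)
  obtain x y where p: "p = (x, y)" by (cases p)
  have "rev (w0 # map snd qs) = last (w0 # map snd qs) # rev (butlast (w0 # map snd qs))"
    by (cases "w0 # map snd qs" rule: rev_cases) auto
  then have "reverse_walk w0 (qs @ [(x, y)]) = (x, last (w0 # map snd qs)) # reverse_walk w0 qs"
    unfolding reverse_walk_def by (simp add: butlast_append)
  then show ?case using snoc.IH unfolding p by (simp add: flat_pairs_append)
qed (simp add: reverse_walk_def)

lemma returns_last_snd:
  assumes "returns_last w0 ps"
  shows "butlast (w0 # map snd ps) = w0 # butlast (map snd ps)"
    and "map snd ps = butlast (map snd ps) @ [w0]" and "w0 \<notin> set (butlast (map snd ps))"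
  using assms unfolding returns_last_iff by auto

lemma map_snd_reverse_walk_returns:
  "returns_last w0 ps \<Longrightarrow> map snd (reverse_walk w0 ps) = rev (butlast (map snd ps)) @ [w0]"
  unfolding map_snd_reverse_walk using returns_last_snd(1)[of w0 ps] by simp

lemma returns_last_reverse_walk: "returns_last w0 ps \<Longrightarrow> returns_last w0 (reverse_walk w0 ps)"
  unfolding returns_last_iff[of w0 "reverse_walk w0 ps"]
  using map_snd_reverse_walk_returns[of w0 ps] returns_last_snd(3)[of w0 ps] by simp

lemma reverse_walk_involutive: "returns_last w0 ps \<Longrightarrow> reverse_walk w0 (reverse_walk w0 ps) = ps"
proof -
  assume r: "returns_last w0 ps"
  have "map snd (reverse_walk w0 (reverse_walk w0 ps)) = butlast (map snd ps) @ [w0]"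
    unfolding map_snd_reverse_walk_returns[OF returns_last_reverse_walk[OF r]]
      map_snd_reverse_walk_returns[OF r] by (simp add: butlast_append)
  then have "map snd (reverse_walk w0 (reverse_walk w0 ps)) = map snd ps"
    using returns_last_snd(2)[OF r] by simp
  moreover have "map fst (reverse_walk w0 (reverse_walk w0 ps)) = map fst ps"
    by (simp add: map_fst_reverse_walk)
  ultimately show ?thesis by (metis zip_map_fst_snd)
qed

lemma walk_path_reverse:
  assumes "walk_path w0 G None w0 ps G'" "wf_graph d V G"
  shows "walk_path w0 G' None w0 (reverse_walk w0 ps) G"
proof -
  have seq: "switch_seq G (w0 # flat_pairs ps) G'" and nb: "no_backtrack None ps"
    and r: "returns_last w0 ps"
    using assms(1) unfolding walk_path_iff by blast+
  have "last (w0 # map snd ps) = w0" using returns_last_snd(2)[OF r] by (metis last_ConsR last_snoc snoc_eq_iff_butlast)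
  then have "switch_seq G' (w0 # flat_pairs (reverse_walk w0 ps)) G"
    using switch_seq_rev[OF seq assms(2)] unfolding rev_flat_pairs by simp
  moreover have "no_backtrack None (reverse_walk w0 ps)"
    using nb unfolding no_backtrack_None map_fst_reverse_walk successively_neq_rev .
  ultimately show ?thesis unfolding walk_path_iff using returns_last_reverse_walk[OF r] by blast
qed

definition walks_upto :: "nat \<Rightarrow> ('a \<times> 'a) list set" where
  "walks_upto k = {ps. set ps \<subseteq> V \<times> V \<and> length ps \<le> k}"

lemma finite_walks_upto: "finite (walks_upto k)"
  unfolding walks_upto_def using finite_V by (intro finite_lists_length_le) auto

lemma sum_walks_upto_Suc:
  "(\<Sum>ps\<in>walks_upto (Suc k). f ps) = f [] + (\<Sum>x\<in>V. \<Sum>y\<in>V. \<Sum>ps\<in>walks_upto k. f ((x, y) # ps))"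
proof -
  let ?Cons = "\<lambda>(p, ps). p # ps"
  have eq: "walks_upto (Suc k) = insert [] (?Cons ` ((V \<times> V) \<times> walks_upto k))"
  proof (intro equalityI subsetI)
    fix ps assume "ps \<in> walks_upto (Suc k)"
    then show "ps \<in> insert [] (?Cons ` ((V \<times> V) \<times> walks_upto k))"
      unfolding walks_upto_def by (cases ps) auto
  qed (auto simp: walks_upto_def)
  have inj: "inj_on ?Cons ((V \<times> V) \<times> walks_upto k)" by (auto simp: inj_on_def)
  have "(\<Sum>ps\<in>?Cons ` ((V \<times> V) \<times> walks_upto k). f ps) = (\<Sum>q\<in>(V \<times> V) \<times> walks_upto k. f (fst q # snd q))"
    using sum.reindex[OF inj, of f] by (simp add: case_prod_beta')
  also have "\<dots> = (\<Sum>(p, ps)\<in>(V \<times> V) \<times> walks_upto k. f (p # ps))"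
    by (simp add: case_prod_beta')
  also have "\<dots> = (\<Sum>p\<in>V \<times> V. \<Sum>ps\<in>walks_upto k. f (p # ps))"
    by (rule sum.cartesian_product[symmetric])
  also have "\<dots> = (\<Sum>(x, y)\<in>V \<times> V. \<Sum>ps\<in>walks_upto k. f ((x, y) # ps))"
    by (simp add: case_prod_beta')
  also have "\<dots> = (\<Sum>x\<in>V. \<Sum>y\<in>V. \<Sum>ps\<in>walks_upto k. f ((x, y) # ps))"
    by (rule sum.cartesian_product[symmetric])
  finally show ?thesis
    unfolding eq using finite_walks_upto finite_V by (subst sum.insert) auto
qed

lemma walks_upto_reverse_walk:
  "w0 \<in> V \<Longrightarrow> ps \<in> walks_upto k \<Longrightarrow> reverse_walk w0 ps \<in> walks_upto k"
proof -
  assume w0: "w0 \<in> V" and ps: "ps \<in> walks_upto k"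
  have fst: "set (map fst (reverse_walk w0 ps)) \<subseteq> V"
    using ps unfolding walks_upto_def map_fst_reverse_walk by auto
  have snd: "set (map snd (reverse_walk w0 ps)) \<subseteq> V"
  proof -
    have "set (w0 # map snd ps) \<subseteq> V" using ps w0 unfolding walks_upto_def by auto
    then have "set (butlast (w0 # map snd ps)) \<subseteq> V" by (meson in_set_butlastD subset_iff)
    then show ?thesis unfolding map_snd_reverse_walk by simp
  qed
  have "set (reverse_walk w0 ps) \<subseteq> V \<times> V"
  proof
    fix p assume "p \<in> set (reverse_walk w0 ps)"
    then have "fst p \<in> V" "snd p \<in> V" using fst snd by auto
    then show "p \<in> V \<times> V" by (simp add: mem_Times_iff)
  qed
  then show ?thesis using ps unfolding walks_upto_def by simp
qed

definition in_weight :: "'a \<Rightarrow> real" where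
  "in_weight v = 1 / real (card (nbrs Ft G0 v))"

definition out_weight :: "'a \<Rightarrow> 'a \<Rightarrow> real" where
  "out_weight w0 x = 1 / (real (card (non_nbrs V Ft G0 x)) + (if \<not> d \<and> x = w0 then 1 else 0))"

definition path_weight :: "'a \<Rightarrow> 'a \<Rightarrow> ('a \<times> 'a) list \<Rightarrow> real" where
  "path_weight w0 cur ps =
     prod_list (map in_weight (cur # butlast (map snd ps))) * prod_list (map (out_weight w0) (map fst ps))"

lemma path_weight_single: "path_weight w0 cur [(x, y)] = in_weight cur * out_weight w0 x"
  unfolding path_weight_def by simp

lemma path_weight_Cons:
  "ps \<noteq> [] \<Longrightarrow> path_weight w0 cur ((x, y) # ps) = in_weight cur * out_weight w0 x * path_weight w0 y ps"
  unfolding path_weight_def by simp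

lemma path_weight_reverse_walk:
  "returns_last w0 ps \<Longrightarrow> path_weight w0 w0 (reverse_walk w0 ps) = path_weight w0 w0 ps"
  unfolding path_weight_def map_fst_reverse_walk
  by (simp add: map_snd_reverse_walk_returns butlast_append rev_map[symmetric] del: rev_map)

lemma card_drop_choices:
  assumes st: "walk_state w0 E prev cur"
  shows "card (drop_choices E prev cur) = card (nbrs Ft G0 cur)"
proof -
  have inv: "walk_invariant w0 E cur" using walk_state_invariant[OF st] .
  note cnt = walk_invariantD(6)[OF inv walk_invariantD(4)[OF inv]]
  show ?thesis
  proof (cases prev)
    case None
    then show ?thesis using st cnt unfolding walk_state_def drop_choices_def by simp
  next
    case (Some x)
    then have "cur \<noteq> w0" "x \<in> nbrs Ft E cur" using st unfolding walk_state_def by auto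
    then show ?thesis using Some cnt finite_nbrs_V[OF walk_invariantD(2)[OF inv]]
      unfolding drop_choices_def by (simp add: card_Diff_singleton)
  qed
qed

lemma card_non_nbrs:
  assumes "E \<subseteq> V \<times> V"
  shows "card (non_nbrs V Ft E x) = card {y \<in> V. (x, y) \<notin> Ft} - card (out_nbrs Ft E x)"
proof -
  have "out_nbrs Ft E x \<subseteq> {y \<in> V. (x, y) \<notin> Ft}" using assms unfolding out_nbrs_def by auto
  moreover have "non_nbrs V Ft E x = {y \<in> V. (x, y) \<notin> Ft} - out_nbrs Ft E x"
    unfolding non_nbrs_def out_nbrs_def by auto
  ultimately show ?thesis using finite_V by (simp add: card_Diff_subset finite_subset)
qed

text \<open>In an undirected graph the tail of the dropped edge is short of one free out-edge
  exactly when it is w0.\<close>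

lemma card_non_nbrs_walk:
  assumes st: "walk_state w0 E prev cur" and x: "x \<in> drop_choices E prev cur"
  shows "card (non_nbrs V Ft E x) = card (non_nbrs V Ft G0 x) + (if \<not> d \<and> x = w0 then 1 else 0)"
proof -
  have inv: "walk_invariant w0 E cur" using walk_state_invariant[OF st] .
  note I = walk_invariantD[OF inv]
  have sub0: "G0 \<subseteq> V \<times> V" by (rule wf_graph_subset[OF wf_G0])
  have xc: "(x, cur) \<in> E" using x unfolding drop_choices_def nbrs_def by blast
  then have xV: "x \<in> V" and "x \<noteq> cur" using I(2) wf_graph_no_loop[OF I(1)] by auto
  have le: "card (out_nbrs Ft G0 x) \<le> card {y \<in> V. (x, y) \<notin> Ft}"
    using sub0 finite_V unfolding out_nbrs_def by (intro card_mono) auto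
  show ?thesis
  proof (cases d)
    case True
    then show ?thesis using card_non_nbrs[OF I(2)] card_non_nbrs[OF sub0] I(7)[OF True xV] by simp
  next
    case False
    then show ?thesis using card_non_nbrs[OF I(2)] card_non_nbrs[OF sub0] I(6)[OF xV] \<open>x \<noteq> cur\<close> le
      out_nbrs_eq_nbrs[OF False I(1)] out_nbrs_eq_nbrs[OF False wf_G0] by auto
  qed
qed

text \<open>The probability of a move does not depend on the current graph, only on G0, the current
  vertex and the dropped neighbour. This is why a walk and its reversal are equally likely.\<close>

lemma move_prob_eq:
  "walk_state w0 E prev cur \<Longrightarrow> x \<in> drop_choices E prev cur \<Longrightarrow>
    move_prob E prev cur x = in_weight cur * out_weight w0 x"
  unfolding move_prob_def in_weight_def out_weight_def
  by (simp add: card_drop_choices card_non_nbrs_walk)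

lemma sum_restrict_choices:
  assumes "A \<subseteq> V" "\<And>x. B x \<subseteq> V"
  shows "(\<Sum>x\<in>V. \<Sum>y\<in>V. if x \<in> A \<and> y \<in> B x then h x y else 0) = (\<Sum>x\<in>A. \<Sum>y\<in>B x. (h x y :: real))"
proof -
  have "(\<Sum>y\<in>V. if x \<in> A \<and> y \<in> B x then h x y else 0) = (if x \<in> A then \<Sum>y\<in>B x. h x y else 0)" for x
    using sum.inter_restrict[OF finite_V, of "h x" "B x"] Int_absorb1[OF assms(2)] by simp
  then show ?thesis
    using sum.inter_restrict[OF finite_V, of "\<lambda>x. \<Sum>y\<in>B x. h x y" A] Int_absorb1[OF assms(1)] by simp
qed


lemma sum_walk_paths_Cons:
  assumes st: "walk_state w0 E prev cur"
    and x: "x \<in> drop_choices E prev cur" and y: "y \<in> non_nbrs V Ft E x"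
  shows "(\<Sum>ps\<in>walks_upto k. if walk_path w0 E prev cur ((x, y) # ps) G'
                             then path_weight w0 cur ((x, y) # ps) else 0)
    = move_prob E prev cur x * (if y = w0 then (if switch E x cur y = G' then 1 else 0)
        else \<Sum>ps\<in>walks_upto k. if walk_path w0 (switch E x cur y) (Some x) y ps G'
                               then path_weight w0 y ps else 0)"
proof (cases "y = w0")
  case True
  have "(\<Sum>ps\<in>walks_upto k. if walk_path w0 E prev cur ((x, y) # ps) G'
                           then path_weight w0 cur ((x, y) # ps) else 0)
      = (\<Sum>ps\<in>walks_upto k. if ps = [] then move_prob E prev cur x * (if switch E x cur y = G' then 1 else 0)
                           else 0)"
    using x y True by (intro sum.cong refl) (auto simp: path_weight_single move_prob_eq[OF st x])
  also have "\<dots> = move_prob E prev cur x * (if switch E x cur y = G' then 1 else 0)"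
    using finite_walks_upto by (simp add: walks_upto_def)
  finally show ?thesis using True by simp
next
  case False
  have "walk_path w0 (switch E x cur y) (Some x) y ps G' \<Longrightarrow> ps \<noteq> []" for ps by (cases ps) auto
  then show ?thesis using x y False
    by (auto simp: sum_distrib_left path_weight_Cons move_prob_eq[OF st x] intro!: sum.cong)
qed

lemma walk_prob_paths:
  "walk_state w0 E prev cur \<Longrightarrow> wp k E w0 prev cur G' =
    (\<Sum>ps\<in>walks_upto k. if walk_path w0 E prev cur ps G' then path_weight w0 cur ps else 0)"
proof (induction k arbitrary: E prev cur)
  case 0
  have "walks_upto 0 = {[]}" unfolding walks_upto_def by auto
  then show ?case by simp
next
  case (Suc k)
  let ?A = "drop_choices E prev cur"
  let ?h = "\<lambda>x y. move_prob E prev cur x * (if y = w0 then (if switch E x cur y = G' then 1 else 0)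
                   else wp k (switch E x cur y) w0 (Some x) y G')"
  have "(\<Sum>ps\<in>walks_upto k. if walk_path w0 E prev cur ((x, y) # ps) G'
                           then path_weight w0 cur ((x, y) # ps) else 0)
      = (if x \<in> ?A \<and> y \<in> non_nbrs V Ft E x then ?h x y else 0)" for x y
  proof (cases "x \<in> ?A \<and> y \<in> non_nbrs V Ft E x")
    case True
    then show ?thesis using sum_walk_paths_Cons[OF Suc.prems, where k = k and G' = G']
        Suc.IH[OF walk_state_switch[OF Suc.prems]] by auto
  qed auto
  then have "(\<Sum>ps\<in>walks_upto (Suc k). if walk_path w0 E prev cur ps G' then path_weight w0 cur ps else 0)
      = (\<Sum>x\<in>V. \<Sum>y\<in>V. if x \<in> ?A \<and> y \<in> non_nbrs V Ft E x then ?h x y else 0)"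
    unfolding sum_walks_upto_Suc by simp
  also have "\<dots> = wp (Suc k) E w0 prev cur G'"
    unfolding walk_prob_Suc using drop_choices_subset non_nbrs_subset
      walk_invariantD(2)[OF walk_state_invariant[OF Suc.prems]]
    by (intro sum_restrict_choices) auto
  finally show ?case by simp
qed

lemma walk_prob_sym:
  assumes G: "G \<in> \<G>" and G': "G' \<in> \<G>" and w0: "w0 \<in> V" and ne: "nbrs Ft G w0 \<noteq> {}"
  shows "wp k G w0 None w0 G' = wp k G' w0 None w0 G"
proof -
  have "nbrs Ft G' w0 \<noteq> {}"
    using ne card_nbrs_class[OF G w0] card_nbrs_class[OF G' w0]
      finite_nbrs_V[OF class_subset[OF G]] finite_nbrs_V[OF class_subset[OF G']]
    by (metis card_0_eq)
  then have st: "walk_state w0 G None w0" "walk_state w0 G' None w0"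
    using class_walk_state[OF G w0 ne] class_walk_state[OF G' w0] by auto
  have paths: "wp k H w0 None w0 H' =
      (\<Sum>ps\<in>{ps \<in> walks_upto k. walk_path w0 H None w0 ps H'}. path_weight w0 w0 ps)"
    if "walk_state w0 H None w0" for H H'
    unfolding walk_prob_paths[OF that] by (rule sum.inter_filter[OF finite_walks_upto, symmetric])
  have "(\<Sum>ps\<in>{ps \<in> walks_upto k. walk_path w0 G None w0 ps G'}. path_weight w0 w0 ps) =
        (\<Sum>ps\<in>{ps \<in> walks_upto k. walk_path w0 G' None w0 ps G}. path_weight w0 w0 ps)"
  proof (rule sum.reindex_bij_witness[where i="reverse_walk w0" and j="reverse_walk w0"])
    fix ps assume "ps \<in> {ps \<in> walks_upto k. walk_path w0 G None w0 ps G'}"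
    then show "reverse_walk w0 (reverse_walk w0 ps) = ps"
      and "reverse_walk w0 ps \<in> {ps \<in> walks_upto k. walk_path w0 G' None w0 ps G}"
      and "path_weight w0 w0 (reverse_walk w0 ps) = path_weight w0 w0 ps"
      using walk_path_reverse[OF _ class_wf[OF G]] walks_upto_reverse_walk[OF w0]
        reverse_walk_involutive path_weight_reverse_walk unfolding walk_path_iff by blast+
  next
    fix ps assume "ps \<in> {ps \<in> walks_upto k. walk_path w0 G' None w0 ps G}"
    then show "reverse_walk w0 (reverse_walk w0 ps) = ps"
      and "reverse_walk w0 ps \<in> {ps \<in> walks_upto k. walk_path w0 G None w0 ps G'}"
      using walk_path_reverse[OF _ class_wf[OF G']] walks_upto_reverse_walk[OF w0]
        reverse_walk_involutive unfolding walk_path_iff by blast+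
  qed
  then show ?thesis using paths[OF st(1)] paths[OF st(2)] by simp
qed

section \<open>The transition probabilities\<close>

definition start_vertices :: "('a \<times> 'a) set \<Rightarrow> 'a set" where
  "start_vertices G = {v \<in> V. nbrs Ft G v \<noteq> {}}"

lemma trans_prob_eq: "trans_prob d V F G0 G G' =
  (if start_vertices G = {} then (if G' = G then 1 else 0)
   else (\<Sum>w\<in>start_vertices G. 1 / real (card (start_vertices G)) * (SUP k. wp k G w None w G')))"
  unfolding trans_prob_def Let_def start_vertices_def by (rule refl)

lemma finite_start_vertices: "finite (start_vertices G)"
  unfolding start_vertices_def using finite_V by simp

lemma start_walk_state: "G \<in> \<G> \<Longrightarrow> w \<in> start_vertices G \<Longrightarrow> walk_state w G None w"
  unfolding start_vertices_def using class_walk_state by blast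

lemma start_vertices_class:
  assumes G: "G \<in> \<G>" and G': "G' \<in> \<G>" shows "start_vertices G = start_vertices G'"
proof -
  have "nbrs Ft G v \<noteq> {} \<longleftrightarrow> nbrs Ft G' v \<noteq> {}" if "v \<in> V" for v
    using card_nbrs_class[OF G that] card_nbrs_class[OF G' that]
      finite_nbrs_V[OF class_subset[OF G]] finite_nbrs_V[OF class_subset[OF G']]
    by (metis card_0_eq)
  then show ?thesis unfolding start_vertices_def by blast
qed

lemma walk_prob_le_SUP:
  "walk_state w G None w \<Longrightarrow> wp k G w None w G' \<le> (SUP k. wp k G w None w G')"
  by (rule cSUP_upper[OF _ bdd_above_walk_prob]) auto

lemma SUP_walk_prob_nonneg: "walk_state w G None w \<Longrightarrow> 0 \<le> (SUP k. wp k G w None w G')"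
  using walk_prob_le_SUP[of w G 0 G'] walk_prob_nonneg[of 0 G w None w G'] by linarith

lemma trans_prob_nonneg: "G \<in> \<G> \<Longrightarrow> 0 \<le> trans_prob d V F G0 G G'"
  unfolding trans_prob_eq using SUP_walk_prob_nonneg start_walk_state
  by (auto intro!: sum_nonneg mult_nonneg_nonneg)

lemma trans_prob_ge:
  assumes "G \<in> \<G>" "w \<in> start_vertices G"
  shows "1 / real (card (start_vertices G)) * wp k G w None w H \<le> trans_prob d V F G0 G H"
proof -
  note st = start_walk_state[OF assms(1)]
  have "1 / real (card (start_vertices G)) * wp k G w None w H
      \<le> 1 / real (card (start_vertices G)) * (SUP k. wp k G w None w H)"
    using walk_prob_le_SUP[OF st[OF assms(2)]] by (simp add: divide_right_mono)
  also have "\<dots> \<le> (\<Sum>v\<in>start_vertices G. 1 / real (card (start_vertices G)) * (SUP k. wp k G v None v H))"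
    using SUP_walk_prob_nonneg st
    by (intro member_le_sum[OF assms(2)] finite_start_vertices) simp
  also have "\<dots> = trans_prob d V F G0 G H" unfolding trans_prob_eq using assms(2) by auto
  finally show ?thesis .
qed

lemma trans_prob_class: "G \<in> \<G> \<Longrightarrow> trans_prob d V F G0 G G' \<noteq> 0 \<Longrightarrow> G' \<in> \<G>"
proof (rule ccontr)
  assume G: "G \<in> \<G>" and ne: "trans_prob d V F G0 G G' \<noteq> 0" and G': "G' \<notin> \<G>"
  have "wp k G w None w G' = 0" if "w \<in> start_vertices G" for w k
    using walk_prob_class[OF walk_state_invariant[OF start_walk_state[OF G that]]] G' by blast
  then have "trans_prob d V F G0 G G' = 0" unfolding trans_prob_eq using G G' by auto
  then show False using ne by simp
qed

lemma trans_prob_sum: "G \<in> \<G> \<Longrightarrow> (\<Sum>G'\<in>\<G>. trans_prob d V F G0 G G') = 1"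
proof (cases "start_vertices G = {}")
  case True
  assume "G \<in> \<G>"
  then show ?thesis unfolding trans_prob_eq using True finite_class by (simp add: sum.delta')
next
  case False
  assume G: "G \<in> \<G>"
  let ?S = "start_vertices G"
  have "(\<Sum>G'\<in>\<G>. trans_prob d V F G0 G G')
      = (\<Sum>G'\<in>\<G>. \<Sum>w\<in>?S. 1 / real (card ?S) * (SUP k. wp k G w None w G'))"
    unfolding trans_prob_eq using False by simp
  also have "\<dots> = (\<Sum>w\<in>?S. 1 / real (card ?S) * (\<Sum>G'\<in>\<G>. SUP k. wp k G w None w G'))"
    by (subst sum.swap) (simp add: sum_distrib_left)
  also have "\<dots> = (\<Sum>w\<in>?S. 1 / real (card ?S))"
    using sum_SUP_walk_prob start_walk_state[OF G] by simp
  also have "\<dots> = 1" using False finite_start_vertices by simp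
  finally show ?thesis .
qed

lemma trans_prob_sym:
  assumes G: "G \<in> \<G>" and G': "G' \<in> \<G>"
  shows "trans_prob d V F G0 G G' = trans_prob d V F G0 G' G"
proof -
  have "(SUP k. wp k G w None w G') = (SUP k. wp k G' w None w G)" if "w \<in> start_vertices G" for w
    using that walk_prob_sym[OF G G'] unfolding start_vertices_def by simp
  then show ?thesis
    unfolding trans_prob_eq start_vertices_class[OF G G'] by (auto intro!: sum.cong)
qed

lemma class_subset_eq:
  assumes G: "G \<in> \<G>" and G': "G' \<in> \<G>" and "G \<subseteq> G'" shows "G = G'"
proof (rule ccontr)
  assume "G \<noteq> G'"
  then obtain u v where uv: "(u, v) \<in> G'" "(u, v) \<notin> G" using assms(3) by auto
  have "v \<in> V" using uv class_subset[OF G'] by blast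
  have "{a. (a, v) \<in> G} \<subset> {a. (a, v) \<in> G'}" using assms(3) uv by auto
  then have "indeg G v < indeg G' v" unfolding indeg_def
    by (rule psubset_card_mono[OF finite_pairs_into[OF finite_wf_graph[OF class_wf[OF G']]]])
  moreover have "indeg G v = indeg G0 v" "indeg G' v = indeg G0 v"
    using G G' \<open>v \<in> V\<close> unfolding graph_class_def by auto
  ultimately show False by simp
qed

text \<open>From a graph G of the class the sampler reaches, with positive probability, a graph
  strictly closer to any other graph H of the class: start at the head w of an edge of G not in
  H, switch that edge into H and continue greedily.\<close>

lemma closer_walk:
  assumes H: "H \<in> \<G>" and G: "G \<in> \<G>" and xw: "(x, w) \<in> G" "(x, w) \<notin> H"
  obtains G'' k where "0 < wp k G w None w G''" "card (sym_diff G'' H) < card (sym_diff G H)"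
proof -
  have wfG: "wf_graph d V G" and subG: "G \<subseteq> V \<times> V" using class_wf[OF G] class_subset[OF G] by auto
  have "x \<in> V" "w \<in> V" using xw subG by auto
  have "(x, w) \<notin> Ft" using xw G H unfolding fixed_pairs_def by blast
  then have x: "x \<in> drop_choices G None w" using xw unfolding drop_choices_def nbrs_def by simp
  have st: "walk_state w G None w"
    using class_walk_state[OF G \<open>w \<in> V\<close>] x unfolding drop_choices_def by auto
  note inv = walk_state_invariant[OF st]
  have "x \<noteq> w" using xw wf_graph_no_loop[OF wfG] by blast
  then obtain y where y: "(x, y) \<in> H" "y \<in> non_nbrs V Ft G x"
    using exists_non_nbr_inside[OF inv H xw \<open>(x, w) \<notin> Ft\<close>] by blast
  let ?E = "switch G x w y"
  have closer: "card (sym_diff ?E H) < card (sym_diff G H)"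
    using card_sym_diff_switch[OF wfG H choices_switchable[OF x y(2)] xw(2) y(1)] .
  show ?thesis
  proof (cases "y = w")
    case True
    have "w \<in> non_nbrs V Ft G x" using y(2) True by simp
    then have "0 < wp (Suc 0) G w None w ?E"
      using walk_prob_Suc_ge_halt[OF subG x, where k = 0] True min_move_prob_pos[OF \<open>x \<in> V\<close>] by force
    then show ?thesis using that closer by blast
  next
    case False
    let ?N = "card (sym_diff ?E H) + 1"
    obtain G'' where G'': "min_move_prob ^ ?N \<le> wp ?N ?E w (Some x) y G''"
        "card (sym_diff G'' H) \<le> card (sym_diff ?E H)"
      using greedy_walk[OF H walk_state_switch[OF st x y(2) False] y(1)] by blast
    have "0 < min_move_prob * wp ?N ?E w (Some x) y G''"
      using G''(1) min_move_prob_pos[OF \<open>x \<in> V\<close>] by (meson less_le_trans mult_pos_pos zero_less_power)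
    also have "\<dots> \<le> wp (Suc ?N) G w None w G''" by (rule walk_prob_Suc_ge_continue[OF subG x y(2) False])
    finally show ?thesis using that G''(2) closer by (meson le_less_trans)
  qed
qed

lemma trans_prob_closer:
  assumes G: "G \<in> \<G>" and G': "G' \<in> \<G>" and "G \<noteq> G'"
  obtains H where "H \<in> \<G>" "0 < trans_prob d V F G0 G H" "card (sym_diff H G') < card (sym_diff G G')"
proof -
  have "\<not> G \<subseteq> G'" using class_subset_eq[OF G G'] assms(3) by blast
  then obtain x w where xw: "(x, w) \<in> G" "(x, w) \<notin> G'" by auto
  obtain H k where H: "0 < wp k G w None w H" "card (sym_diff H G') < card (sym_diff G G')"
    using closer_walk[OF G' G xw] .
  have "(x, w) \<notin> Ft" using xw G G' unfolding fixed_pairs_def by blast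
  then have w: "w \<in> start_vertices G"
    using xw class_subset[OF G] unfolding start_vertices_def nbrs_def by auto
  have "wp k G w None w H \<noteq> 0" using H(1) by simp
  then have "H \<in> \<G>" by (rule walk_prob_class[OF walk_state_invariant[OF start_walk_state[OF G w]]])
  moreover have "0 < 1 / real (card (start_vertices G)) * wp k G w None w H"
  proof -
    have "0 < card (start_vertices G)" using w finite_start_vertices[of G] by (auto simp: card_gt_0_iff)
    then show ?thesis using H(1) by simp
  qed
  ultimately show ?thesis using that H(2) trans_prob_ge[OF G w, of k H] by simp
qed

lemma trans_pow_nonneg: "H \<in> \<G> \<Longrightarrow> 0 \<le> trans_pow d V F G0 n H G'"
  by (induction n arbitrary: H) (auto intro!: sum_nonneg mult_nonneg_nonneg trans_prob_nonneg)

lemma trans_pow_reach: "G' \<in> \<G> \<Longrightarrow> G \<in> \<G> \<Longrightarrow> \<exists>n. 0 < trans_pow d V F G0 n G G'"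
proof (induction "card (sym_diff G G')" arbitrary: G rule: less_induct)
  case less
  show ?case
  proof (cases "G = G'")
    case False
    obtain H where H: "H \<in> \<G>" "0 < trans_prob d V F G0 G H" "card (sym_diff H G') < card (sym_diff G G')"
      using trans_prob_closer[OF less.prems(2,1) False] .
    obtain n where n: "0 < trans_pow d V F G0 n H G'" using less.hyps[OF H(3) less.prems(1) H(1)] by blast
    have "0 < trans_prob d V F G0 G H * trans_pow d V F G0 n H G'" using H(2) n by simp
    also have "\<dots> \<le> trans_pow d V F G0 (Suc n) G G'"
      using H(1) finite_class trans_prob_nonneg[OF less.prems(2)] trans_pow_nonneg
      by (auto intro!: member_le_sum[where f = "\<lambda>H'. trans_prob d V F G0 G H' * trans_pow d V F G0 n H' G'"])
    finally show ?thesis by blast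
  qed (auto intro: exI[of _ 0])
qed

end

theorem proposition2:
  fixes d :: bool and V :: "'a set" and F G0 :: "('a \<times> 'a) set"
  assumes "finite V" and "wf_graph d V G0"
  defines "\<G> \<equiv> graph_class d V F G0"
      and "P \<equiv> trans_prob d V F G0"
      and "\<pi> \<equiv> (\<lambda>G::('a \<times> 'a) set. 1 / real (card (graph_class d V F G0)))"
  shows "(\<forall>G\<in>\<G>. \<forall>G'. P G G' \<noteq> 0 \<longrightarrow> G' \<in> \<G>)
       \<and> (\<forall>G\<in>\<G>. (\<Sum>G'\<in>\<G>. P G G') = 1)
       \<and> (\<forall>G\<in>\<G>. \<forall>G'\<in>\<G>. \<pi> G * P G G' = \<pi> G' * P G' G)
       \<and> (\<forall>G\<in>\<G>. \<forall>G'\<in>\<G>. \<exists>n. trans_pow d V F G0 n G G' > 0)"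
proof -
  interpret sampler_setting d V F G0 using assms(1,2) by unfold_locales
  show ?thesis unfolding \<G>_def P_def \<pi>_def
    using trans_prob_class trans_prob_sum trans_prob_sym trans_pow_reach by auto
qed

end
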